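(* Every two-qubit unitary operation is deterministically implementable over the grail network.
   Context: The grail network has nodes $i_1,i_2,n_1,n_2,n_3,n_4,o_1,o_2$ and nine edges: $\{i_1,n_1\}$, $\{n_4,o_2\}$, and the edges of a $(2,3)$-cluster network on the rows $(n_1,n_2,o_1)$ and $(i_2,n_3,n_4)$, namely $\{n_1,n_2\},\{n_2,o_1\},\{i_2,n_3\},\{n_3,n_4\},\{n_1,i_2\},\{n_2,n_3\},\{o_1,n_4\}$. The resource state is the tensor product over all edges of an EPR pair $(|00\rangle+|11\rangle)/\sqrt2$ with one qubit at each endpoint; classical communication between any nodes is unrestricted. Input qubits are at $i_1,i_2$ and output qubits at $o_1,o_2$. A two-qubit unitary $U$ is deterministically implementable if some LOCC map (local operations at single nodes with unrestricted classical communication) maps $|\psi\rangle\langle\psi|\otimes|\Phi\rangle\langle\Phi|_{\mathcal R}$ to $U|\psi\rangle\langle\psi|U^\dagger$ on the output qubits for every pure input $|\psi\rangle$. *)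

theory Defs
  imports Complex_Main "Jordan_Normal_Form.Schur_Decomposition"
begin

text \<open>Nodes: i1 = 0, i2 = 1, n1 = 2, n2 = 3, n3 = 4, n4 = 5, o1 = 6, o2 = 7.
  Each node v carries a finite-dimensional local space C^(D v) with basis 0..D v - 1.
  A global basis vector is a configuration c : node => local basis index
  (with c v = 0 for v >= 8).  Operators on the global space are functions
  cfg => cfg => complex (matrix entries); only entries at valid configurations matter.\<close>

type_synonym cfg = "nat \<Rightarrow> nat"
type_synonym op = "cfg \<Rightarrow> cfg \<Rightarrow> complex"

definition num_nodes :: nat where "num_nodes = 8"

definition configs :: "(nat \<Rightarrow> nat) \<Rightarrow> cfg set" where
  "configs D = {c. (\<forall>v<num_nodes. c v < D v) \<and> (\<forall>v. num_nodes \<le> v \<longrightarrow> c v = 0)}"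

text \<open>Conjugation rho |-> (I \<otimes> K \<otimes> I) rho (I \<otimes> K \<otimes> I)^dagger, with K acting on node u,
  K a (dim_row K) x (dim_col K) matrix mapping C^(dim_col K) to C^(dim_row K).\<close>

definition kraus_apply :: "nat \<Rightarrow> complex mat \<Rightarrow> op \<Rightarrow> op" where
  "kraus_apply u K \<rho> = (\<lambda>c c'. \<Sum>a<dim_col K. \<Sum>b<dim_col K.
       K $$ (c u, a) * \<rho> (c(u := a)) (c'(u := b)) * cnj (K $$ (c' u, b)))"

text \<open>Finite-round LOCC protocols.  locc D D' \<Lambda> means: \<Lambda> is the (outcome-summed) map of
  a protocol that starts with local dimensions D and ends (on every branch) with local
  dimensions D'.  A round: some node u performs a local instrument with Kraus operators
  K j (j < m), K j : C^(D u) -> C^(n j) (ancillas / discarding are covered by the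
  dimension change), satisfying completeness; the outcome j is broadcast and the
  remaining protocol \<Lambda> j may depend on it.\<close>

inductive locc :: "(nat \<Rightarrow> nat) \<Rightarrow> (nat \<Rightarrow> nat) \<Rightarrow> (op \<Rightarrow> op) \<Rightarrow> bool" where
  locc_id: "locc D D (\<lambda>\<rho>. \<rho>)"
| locc_step: "\<lbrakk> u < num_nodes;
     \<forall>j<(m::nat). K j \<in> carrier_mat (n j) (D u);
     \<forall>a<D u. \<forall>b<D u. (\<Sum>j<m. \<Sum>i<n j. cnj (K j $$ (i, a)) * K j $$ (i, b))
                        = (if a = b then 1 else 0);
     \<forall>j<m. locc (D(u := n j)) D' (\<Lambda> j) \<rbrakk>
   \<Longrightarrow> locc D D' (\<lambda>\<rho> c c'. \<Sum>j<m. \<Lambda> j (kraus_apply u (K j) \<rho>) c c')"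

text \<open>Edges (as pairs of nodes), in the order
  {i1,n1}, {n4,o2}, {n1,n2}, {n2,o1}, {i2,n3}, {n3,n4}, {n1,i2}, {n2,n3}, {o1,n4}.\<close>

definition grail_edges :: "(nat \<times> nat) list" where
  "grail_edges = [(0,2), (5,7), (2,3), (3,6), (1,4), (4,5), (2,1), (3,4), (6,5)]"

datatype qlabel = InQ | EdgeQ nat

definition node_qubits :: "nat \<Rightarrow> qlabel list" where
  "node_qubits v = (if v = 0 \<or> v = 1 then [InQ] else [])
     @ [EdgeQ e. e \<leftarrow> [0..<length grail_edges],
                 v = fst (grail_edges ! e) \<or> v = snd (grail_edges ! e)]"

definition D0 :: "nat \<Rightarrow> nat" where
  "D0 v = (if v < num_nodes then 2 ^ length (node_qubits v) else 1)"

text \<open>Bit value of qubit l at node v in configuration c (qubit at position p of the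
  node's list is binary digit p of the local index).\<close>

definition qbit :: "cfg \<Rightarrow> nat \<Rightarrow> qlabel \<Rightarrow> nat" where
  "qbit c v l = (c v div 2 ^ length (takeWhile (\<lambda>x. x \<noteq> l) (node_qubits v))) mod 2"

text \<open>Amplitude of |psi> (on i1,i2; index 2*bit(i1) + bit(i2)) tensor the EPR pairs.\<close>

definition init_amp :: "complex vec \<Rightarrow> cfg \<Rightarrow> complex" where
  "init_amp \<psi> c = \<psi> $ (2 * qbit c 0 InQ + qbit c 1 InQ) *
     (\<Prod>e<length grail_edges.
        if qbit c (fst (grail_edges ! e)) (EdgeQ e) = qbit c (snd (grail_edges ! e)) (EdgeQ e)
        then complex_of_real (1 / sqrt 2) else 0)"

definition rho0 :: "complex vec \<Rightarrow> op" where
  "rho0 \<psi> = (\<lambda>c c'. init_amp \<psi> c * cnj (init_amp \<psi> c'))"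

text \<open>Output: o1 (node 6) and o2 (node 7) hold one qubit each; all other systems discarded.\<close>

definition Dout :: "nat \<Rightarrow> nat" where
  "Dout v = (if v = 6 \<or> v = 7 then 2 else 1)"

definition out_idx :: "cfg \<Rightarrow> nat" where
  "out_idx c = 2 * c 6 + c 7"

definition unitary_mat :: "complex mat \<Rightarrow> nat \<Rightarrow> bool" where
  "unitary_mat U n \<longleftrightarrow> U \<in> carrier_mat n n \<and> mat_adjoint U * U = 1\<^sub>m n"

definition det_implementable :: "complex mat \<Rightarrow> bool" where
  "det_implementable U \<longleftrightarrow> (\<exists>\<Lambda>. locc D0 Dout \<Lambda> \<and>
     (\<forall>\<psi>. dim_vec \<psi> = 4 \<longrightarrow> (\<Sum>i<4. (cmod (\<psi> $ i))\<^sup>2) = 1 \<longrightarrow>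
        (\<forall>c\<in>configs Dout. \<forall>c'\<in>configs Dout.
           \<Lambda> (rho0 \<psi>) c c' = (U *\<^sub>v \<psi>) $ out_idx c * cnj ((U *\<^sub>v \<psi>) $ out_idx c'))))"

end

theory Submission
  imports Defs
begin

(*
  Write the unitary on input bits (a, b) and output bits (y1, y2) as
    U[(y1,y2),(a,b)] = \<Sum>q. L y2 [y1,q] * M q [y2,b] * R b [q,a],
  a product of three controlled one-qubit gates with alternating controls; it exists for every
  two-qubit unitary because conjugating by suitable controlled gates clears the off-diagonal
  blocks one after the other.

  In the protocol every node acts once, in the order i1, i2, n1, n2, n3, n4, o1, o2, measuring
  all its qubits except an output qubit.  Its Kraus operators teleport the quantum data along the
  unused EPR pairs, undo the Pauli byproducts of the broadcast earlier outcomes, and at n1, n3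
  and o1 apply the controlled gates R, M and L.  Along every branch the global state is the product
  of the unused EPR pairs with an amplitude of the input data, transformed from stage to stage; after the last
  node every one of the 2^18 branches carries 2^-9 U psi, so their sum is U psi psi^* U^*.
*)

section \<open>Pure states and sequential protocols\<close>

definition pure_op :: "(cfg \<Rightarrow> complex) \<Rightarrow> op" where
  "pure_op f = (\<lambda>c c'. f c * cnj (f c'))"

definition local_apply :: "nat \<Rightarrow> complex mat \<Rightarrow> (cfg \<Rightarrow> complex) \<Rightarrow> cfg \<Rightarrow> complex" where
  "local_apply u K f = (\<lambda>c. \<Sum>a<dim_col K. K $$ (c u, a) * f (c(u := a)))"

lemma kraus_apply_pure_op: "kraus_apply u K (pure_op f) = pure_op (local_apply u K f)"
proof (intro ext)
  fix c c'
  show "kraus_apply u K (pure_op f) c c' = pure_op (local_apply u K f) c c'"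
    unfolding kraus_apply_def pure_op_def local_apply_def
    by (simp add: sum_distrib_left sum_distrib_right mult_ac) (rule sum.swap)
qed

lemma configs_upd:
  assumes "x \<in> configs (D(u := d))" "u < num_nodes" "a < D u"
  shows "x(u := a) \<in> configs D"
  using assms unfolding configs_def by (auto split: if_splits)

lemma locc_cong:
  assumes "locc D D' \<Lambda>" and "\<forall>c\<in>configs D. \<forall>c'\<in>configs D. \<rho>1 c c' = \<rho>2 c c'"
    and "c \<in> configs D'" "c' \<in> configs D'"
  shows "\<Lambda> \<rho>1 c c' = \<Lambda> \<rho>2 c c'"
proof -
  from assms(1) have "\<forall>\<rho>1 \<rho>2 :: op. (\<forall>c\<in>configs D. \<forall>c'\<in>configs D. \<rho>1 c c' = \<rho>2 c c') \<longrightarrow>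
     (\<forall>c\<in>configs D'. \<forall>c'\<in>configs D'. \<Lambda> \<rho>1 c c' = \<Lambda> \<rho>2 c c')"
  proof (induction rule: locc.induct)
    case (locc_id D)
    then show ?case by auto
  next
    case (locc_step u m K n D D' \<Lambda>)
    show ?case
    proof (intro allI impI ballI)
      fix \<rho>1 \<rho>2 :: op and c c'
      assume E: "\<forall>c\<in>configs D. \<forall>c'\<in>configs D. \<rho>1 c c' = \<rho>2 c c'"
        and c: "c \<in> configs D'" and c': "c' \<in> configs D'"
      have "\<Lambda> j (kraus_apply u (K j) \<rho>1) c c' = \<Lambda> j (kraus_apply u (K j) \<rho>2) c c'" if j: "j < m" for j
      proof -
        have dc: "dim_col (K j) = D u" using locc_step.hyps(2) j by auto
        have "\<forall>x\<in>configs (D(u := n j)). \<forall>x'\<in>configs (D(u := n j)).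
            kraus_apply u (K j) \<rho>1 x x' = kraus_apply u (K j) \<rho>2 x x'"
          unfolding kraus_apply_def dc
          using E configs_upd[OF _ locc_step.hyps(1)] by (intro ballI sum.cong refl) auto
        then show ?thesis using locc_step.IH j c c' by blast
      qed
      then show "(\<lambda>\<rho> c c'. \<Sum>j<m. \<Lambda> j (kraus_apply u (K j) \<rho>) c c') \<rho>1 c c' =
                 (\<lambda>\<rho> c c'. \<Sum>j<m. \<Lambda> j (kraus_apply u (K j) \<rho>) c c') \<rho>2 c c'" by simp
    qed
  qed
  then show ?thesis using assms(2-4) by blast
qed

text \<open>Nodes v, v + 1, ..., v + n - 1 act in turn; node w applies the instrument K w h with
  M w outcomes, where h records the outcomes broadcast so far.\<close>

fun seq_protocol :: "(nat \<Rightarrow> nat) \<Rightarrow> (nat \<Rightarrow> (nat \<Rightarrow> nat) \<Rightarrow> nat \<Rightarrow> complex mat) \<Rightarrow> nat \<Rightarrow> nat \<Rightarrow> (nat \<Rightarrow> nat) \<Rightarrow> op \<Rightarrow> op" where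
  "seq_protocol M K 0 v h = (\<lambda>\<rho>. \<rho>)"
| "seq_protocol M K (Suc n) v h = (\<lambda>\<rho> c c'. \<Sum>j<M v. seq_protocol M K n (Suc v) (h(v := j)) (kraus_apply v (K v h j) \<rho>) c c')"

definition dims_after :: "nat \<Rightarrow> nat \<Rightarrow> nat" where
  "dims_after v = (\<lambda>w. if w < v then Dout w else D0 w)"

lemma dims_after_8: "dims_after 8 = Dout"
  by (auto simp: dims_after_def Dout_def D0_def num_nodes_def)

lemma dims_after_0: "dims_after 0 = D0"
  by (auto simp: dims_after_def)

lemma dims_after_upd: "(dims_after v)(v := Dout v) = dims_after (Suc v)"
  by (auto simp: dims_after_def)

definition kraus_complete :: "nat \<Rightarrow> nat \<Rightarrow> nat \<Rightarrow> (nat \<Rightarrow> complex mat) \<Rightarrow> bool" where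
  "kraus_complete m d d' K \<longleftrightarrow> (\<forall>j<m. K j \<in> carrier_mat d' d) \<and>
     (\<forall>a<d. \<forall>b<d. (\<Sum>j<m. \<Sum>i<d'. cnj (K j $$ (i, a)) * K j $$ (i, b)) = (if a = b then 1 else 0))"

lemma seq_protocol_locc:
  assumes C: "\<forall>v<8. \<forall>h. kraus_complete (M v) (D0 v) (Dout v) (K v h)"
  shows "n + v = 8 \<Longrightarrow> locc (dims_after v) Dout (seq_protocol M K n v h)"
proof (induction n arbitrary: v h)
  case 0
  then show ?case using locc_id[of Dout] by (simp add: dims_after_8)
next
  case (Suc n)
  have v: "v < 8" using Suc by simp
  have c: "kraus_complete (M v) (D0 v) (Dout v) (K v h)" using C v by blast
  have dims_after_v: "dims_after v v = D0 v" by (simp add: dims_after_def)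
  have "locc (dims_after v) Dout (\<lambda>\<rho> c c'. \<Sum>j<M v. seq_protocol M K n (Suc v) (h(v := j)) (kraus_apply v (K v h j) \<rho>) c c')"
  proof (rule locc_step[where n = "\<lambda>_. Dout v"])
    show "v < num_nodes" using v by (simp add: num_nodes_def)
    show "\<forall>j<M v. K v h j \<in> carrier_mat (Dout v) (dims_after v v)" using c by (simp add: kraus_complete_def dims_after_v)
    show "\<forall>a<dims_after v v. \<forall>b<dims_after v v. (\<Sum>j<M v. \<Sum>i<Dout v. cnj (K v h j $$ (i, a)) * K v h j $$ (i, b)) = (if a = b then 1 else 0)"
      using c by (simp add: kraus_complete_def dims_after_v)
    show "\<forall>j<M v. locc ((dims_after v)(v := Dout v)) Dout (seq_protocol M K n (Suc v) (h(v := j)))"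
      using Suc.IH[of "Suc v"] Suc.prems by (simp add: dims_after_upd)
  qed
  then show ?case by simp
qed

lemma seq_protocol_pure_op:
  assumes C: "\<forall>v<8. \<forall>h. kraus_complete (M v) (D0 v) (Dout v) (K v h)"
    and S: "\<And>v h j c. v < 8 \<Longrightarrow> j < M v \<Longrightarrow> c \<in> configs (dims_after (Suc v)) \<Longrightarrow>
              local_apply v (K v h j) (\<Psi> v h) c = \<Psi> (Suc v) (h(v := j)) c"
    and F: "\<And>h c. c \<in> configs Dout \<Longrightarrow> \<Psi> 8 h c = g * T c"
  shows "n + v = 8 \<Longrightarrow> c \<in> configs Dout \<Longrightarrow> c' \<in> configs Dout \<Longrightarrow>
     seq_protocol M K n v h (pure_op (\<Psi> v h)) c c' = (\<Prod>w\<in>{v..<8}. of_nat (M w)) * (g * cnj g) * (T c * cnj (T c'))"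
proof (induction n arbitrary: v h)
  case 0
  then show ?case using F by (simp add: pure_op_def mult_ac)
next
  case (Suc n)
  have v: "v < 8" using Suc by simp
  have "seq_protocol M K (Suc n) v h (pure_op (\<Psi> v h)) c c'
      = (\<Sum>j<M v. seq_protocol M K n (Suc v) (h(v := j)) (pure_op (local_apply v (K v h j) (\<Psi> v h))) c c')"
    by (simp add: kraus_apply_pure_op)
  also have "\<dots> = (\<Sum>j<M v. seq_protocol M K n (Suc v) (h(v := j)) (pure_op (\<Psi> (Suc v) (h(v := j)))) c c')"
  proof (intro sum.cong refl)
    fix j assume j: "j \<in> {..<M v}"
    show "seq_protocol M K n (Suc v) (h(v := j)) (pure_op (local_apply v (K v h j) (\<Psi> v h))) c c' =
          seq_protocol M K n (Suc v) (h(v := j)) (pure_op (\<Psi> (Suc v) (h(v := j)))) c c'"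
      using Suc.prems S[OF v] j
      by (intro locc_cong[OF seq_protocol_locc[OF C, of n "Suc v" "h(v := j)"]]) (auto simp: pure_op_def)
  qed
  also have "\<dots> = (\<Sum>j<M v. (\<Prod>w\<in>{Suc v..<8}. of_nat (M w)) * (g * cnj g) * (T c * cnj (T c')))"
    using Suc.IH Suc.prems by simp
  also have "\<dots> = (\<Prod>w\<in>{v..<8}. of_nat (M w)) * (g * cnj g) * (T c * cnj (T c'))"
    using v by (simp add: prod.atLeast_Suc_lessThan)
  finally show ?case .
qed

section \<open>Two-qubit unitaries as products of controlled gates\<close>

declare One_nat_def [simp del] \<comment> \<open>keeps the numeral 1 intact in the case analyses on bits\<close>

lemma sum_lessThan_1: "(\<Sum>i<(1::nat). f i) = (f 0 :: complex)" by (simp add: One_nat_def)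
lemma sum_lessThan_2: "(\<Sum>a<(2::nat). f a) = f 0 + (f 1 :: complex)"
  by (simp add: numeral_eq_Suc One_nat_def)
lemma sum_lessThan_4: "(\<Sum>a<(4::nat). f a) = f 0 + f 1 + f 2 + (f 3 :: complex)"
  by (simp add: numeral_eq_Suc lessThan_Suc One_nat_def)
lemma sum_lessThan_8: "(\<Sum>a<(8::nat). f a) = f 0 + f 1 + f 2 + f 3 + f 4 + f 5 + f 6 + (f 7 :: complex)"
  by (simp add: numeral_eq_Suc lessThan_Suc One_nat_def)

lemma bit_cases: "(x::nat) < 2 \<Longrightarrow> x = 0 \<or> x = 1" by arith
lemma less8_cases: "(a::nat) < 8 \<Longrightarrow> a = 0 \<or> a = 1 \<or> a = 2 \<or> a = 3 \<or> a = 4 \<or> a = 5 \<or> a = 6 \<or> a = 7" by arith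
lemma less4_cases: "(a::nat) < 4 \<Longrightarrow> a = 0 \<or> a = 1 \<or> a = 2 \<or> a = 3" by arith

definition iverson :: "bool \<Rightarrow> complex" where "iverson P = (if P then 1 else 0)"

definition unitary2 :: "(nat \<Rightarrow> nat \<Rightarrow> complex) \<Rightarrow> bool" where
  "unitary2 A \<longleftrightarrow> (\<forall>q0<2. \<forall>q0'<2. (\<Sum>q<2. cnj (A q q0) * A q q0') = iverson (q0 = q0'))"

definition unitary2_rows :: "(nat \<Rightarrow> nat \<Rightarrow> complex) \<Rightarrow> bool" where
  "unitary2_rows A \<longleftrightarrow> (\<forall>x<2. \<forall>x'<2. (\<Sum>q<2. A x q * cnj (A x' q)) = iverson (x = x'))"

lemma unitary2D: "unitary2 A \<Longrightarrow> cnj (A 0 0) * A 0 0 + cnj (A 1 0) * A 1 0 = 1 \<and>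
   cnj (A 0 0) * A 0 1 + cnj (A 1 0) * A 1 1 = 0 \<and> cnj (A 0 1) * A 0 0 + cnj (A 1 1) * A 1 0 = 0 \<and>
   cnj (A 0 1) * A 0 1 + cnj (A 1 1) * A 1 1 = 1"
  unfolding unitary2_def by (auto simp: sum_lessThan_2 iverson_def dest: spec[of _ 0] spec[of _ 1])

lemma unitary2_rowsD: "unitary2_rows A \<Longrightarrow> A 0 0 * cnj (A 0 0) + A 0 1 * cnj (A 0 1) = 1 \<and>
   A 0 0 * cnj (A 1 0) + A 0 1 * cnj (A 1 1) = 0 \<and> A 1 0 * cnj (A 0 0) + A 1 1 * cnj (A 0 1) = 0 \<and>
   A 1 0 * cnj (A 1 0) + A 1 1 * cnj (A 1 1) = 1"
  unfolding unitary2_rows_def by (auto simp: sum_lessThan_2 iverson_def dest: spec[of _ 0] spec[of _ 1])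

lemma unitary2I: "cnj (A 0 0) * A 0 0 + cnj (A 1 0) * A 1 0 = 1 \<Longrightarrow>
   cnj (A 0 0) * A 0 1 + cnj (A 1 0) * A 1 1 = 0 \<Longrightarrow> cnj (A 0 1) * A 0 0 + cnj (A 1 1) * A 1 0 = 0 \<Longrightarrow>
   cnj (A 0 1) * A 0 1 + cnj (A 1 1) * A 1 1 = 1 \<Longrightarrow> unitary2 A"
  unfolding unitary2_def by (auto simp: sum_lessThan_2 iverson_def dest!: bit_cases)

lemma unitary2_rowsI: "A 0 0 * cnj (A 0 0) + A 0 1 * cnj (A 0 1) = 1 \<Longrightarrow>
   A 0 0 * cnj (A 1 0) + A 0 1 * cnj (A 1 1) = 0 \<Longrightarrow> A 1 0 * cnj (A 0 0) + A 1 1 * cnj (A 0 1) = 0 \<Longrightarrow>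
   A 1 0 * cnj (A 1 0) + A 1 1 * cnj (A 1 1) = 1 \<Longrightarrow> unitary2_rows A"
  unfolding unitary2_rows_def by (auto simp: sum_lessThan_2 iverson_def dest!: bit_cases)

definition id2 :: "nat \<Rightarrow> nat \<Rightarrow> complex" where "id2 = (\<lambda>x a. if x = a then 1 else 0)"

lemma id2_unitary: "unitary2 id2" "unitary2_rows id2"
  by (auto intro!: unitary2I unitary2_rowsI simp: id2_def)

lemma unitary2_rows_adj: "unitary2_rows A \<Longrightarrow> unitary2 (\<lambda>q a. cnj (A a q))"
  by (drule unitary2_rowsD) (auto intro!: unitary2I simp: mult.commute)

text \<open>4 x 4 matrices as functions; only entries with indices below 4 are meaningful, whence
  the entrywise equality mat4_eq.\<close>

type_synonym mat4 = "nat \<Rightarrow> nat \<Rightarrow> complex"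

definition mat4_mult :: "mat4 \<Rightarrow> mat4 \<Rightarrow> mat4" where "mat4_mult A N = (\<lambda>i k. \<Sum>j<4. A i j * N j k)"
definition mat4_adj :: "mat4 \<Rightarrow> mat4" where "mat4_adj A = (\<lambda>i k. cnj (A k i))"
definition mat4_one :: mat4 where "mat4_one = (\<lambda>i k. if i = k then 1 else 0)"
definition mat4_eq :: "mat4 \<Rightarrow> mat4 \<Rightarrow> bool" where "mat4_eq A N \<longleftrightarrow> (\<forall>i<4. \<forall>k<4. A i k = N i k)"
definition isometry4 :: "mat4 \<Rightarrow> bool" where "isometry4 A \<longleftrightarrow> mat4_eq (mat4_mult (mat4_adj A) A) mat4_one"
definition coisometry4 :: "mat4 \<Rightarrow> bool" where "coisometry4 A \<longleftrightarrow> mat4_eq (mat4_mult A (mat4_adj A)) mat4_one"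

lemma mat4_mult_assoc: "mat4_mult (mat4_mult A N) C = mat4_mult A (mat4_mult N C)"
proof (intro ext)
  fix i k
  have "mat4_mult (mat4_mult A N) C i k = (\<Sum>j<4. \<Sum>l<4. A i l * N l j * C j k)" by (simp add: mat4_mult_def sum_distrib_right)
  also have "\<dots> = (\<Sum>l<4. \<Sum>j<4. A i l * N l j * C j k)" by (rule sum.swap)
  also have "\<dots> = mat4_mult A (mat4_mult N C) i k" by (simp add: mat4_mult_def sum_distrib_left mult_ac)
  finally show "mat4_mult (mat4_mult A N) C i k = mat4_mult A (mat4_mult N C) i k" .
qed

lemma mat4_adj_mult: "mat4_adj (mat4_mult A N) = mat4_mult (mat4_adj N) (mat4_adj A)"
  unfolding mat4_mult_def mat4_adj_def by (intro ext) (simp add: mult_ac)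

lemma mat4_adj_adj: "mat4_adj (mat4_adj A) = A" unfolding mat4_adj_def by simp

lemma mat4_eq_refl: "mat4_eq A A" by (simp add: mat4_eq_def)
lemma mat4_eq_sym: "mat4_eq A N \<Longrightarrow> mat4_eq N A" by (simp add: mat4_eq_def)
lemma mat4_eq_trans: "mat4_eq A N \<Longrightarrow> mat4_eq N C \<Longrightarrow> mat4_eq A C" by (simp add: mat4_eq_def)

lemma mat4_mult_cong: "mat4_eq A A' \<Longrightarrow> mat4_eq N N' \<Longrightarrow> mat4_eq (mat4_mult A N) (mat4_mult A' N')"
  unfolding mat4_eq_def mat4_mult_def by (auto intro!: sum.cong)

lemma mat4_mult_one_left: "mat4_eq (mat4_mult mat4_one A) A"
  unfolding mat4_eq_def
proof (intro allI impI)
  fix i k :: nat assume i: "i < 4"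
  have "mat4_mult mat4_one A i k = (\<Sum>j<4. if j = i then A j k else 0)"
    unfolding mat4_mult_def mat4_one_def by (intro sum.cong) auto
  then show "mat4_mult mat4_one A i k = A i k" using i by simp
qed

lemma mat4_mult_one_right: "mat4_eq (mat4_mult A mat4_one) A"
  unfolding mat4_eq_def
proof (intro allI impI)
  fix i k :: nat assume k: "k < 4"
  have "mat4_mult A mat4_one i k = (\<Sum>j<4. if j = k then A i j else 0)"
    unfolding mat4_mult_def mat4_one_def by (intro sum.cong) auto
  then show "mat4_mult A mat4_one i k = A i k" using k by simp
qed

lemma isometry4_mult: assumes "isometry4 A" "isometry4 N" shows "isometry4 (mat4_mult A N)"
proof -
  have "mat4_mult (mat4_adj (mat4_mult A N)) (mat4_mult A N) = mat4_mult (mat4_adj N) (mat4_mult (mat4_mult (mat4_adj A) A) N)"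
    by (simp add: mat4_adj_mult mat4_mult_assoc)
  moreover have "mat4_eq (mat4_mult (mat4_adj N) (mat4_mult (mat4_mult (mat4_adj A) A) N)) (mat4_mult (mat4_adj N) (mat4_mult mat4_one N))"
    using assms(1) by (intro mat4_mult_cong mat4_eq_refl) (simp add: isometry4_def)
  moreover have "mat4_eq (mat4_mult (mat4_adj N) (mat4_mult mat4_one N)) (mat4_mult (mat4_adj N) N)"
    by (intro mat4_mult_cong mat4_eq_refl mat4_mult_one_left)
  ultimately show ?thesis using assms(2) unfolding isometry4_def by (metis mat4_eq_trans)
qed

lemma isometry4_adj: "coisometry4 A \<Longrightarrow> isometry4 (mat4_adj A)" by (simp add: isometry4_def coisometry4_def mat4_adj_adj)

lemma coisometry4_cancel_left:
  assumes "coisometry4 P" shows "mat4_eq (mat4_mult P (mat4_mult (mat4_adj P) A)) A"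
proof -
  have "mat4_eq (mat4_mult (mat4_mult P (mat4_adj P)) A) (mat4_mult mat4_one A)"
    using assms by (intro mat4_mult_cong mat4_eq_refl) (simp add: coisometry4_def)
  then show ?thesis by (metis mat4_mult_assoc mat4_eq_trans mat4_mult_one_left)
qed

lemma coisometry4_cancel_right:
  assumes "coisometry4 W" shows "mat4_eq (mat4_mult (mat4_mult A W) (mat4_adj W)) A"
proof -
  have "mat4_eq (mat4_mult A (mat4_mult W (mat4_adj W))) (mat4_mult A mat4_one)"
    using assms by (intro mat4_mult_cong mat4_eq_refl) (simp add: coisometry4_def)
  then show ?thesis by (metis mat4_mult_assoc mat4_eq_trans mat4_mult_one_right)
qed

text \<open>With basis index 2 * y1 + y2, ctrl_by_second F applies F y2 to the first qubit and
  ctrl_by_first F applies F y1 to the second.\<close>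

definition ctrl_by_second :: "(nat \<Rightarrow> nat \<Rightarrow> nat \<Rightarrow> complex) \<Rightarrow> mat4" where
  "ctrl_by_second F = (\<lambda>i k. if i mod 2 = k mod 2 then F (i mod 2) (i div 2) (k div 2) else 0)"
definition ctrl_by_first :: "(nat \<Rightarrow> nat \<Rightarrow> nat \<Rightarrow> complex) \<Rightarrow> mat4" where
  "ctrl_by_first F = (\<lambda>i k. if i div 2 = k div 2 then F (i div 2) (i mod 2) (k mod 2) else 0)"
lemma coisometry4_ctrl_by_second: assumes "unitary2_rows (F 0)" "unitary2_rows (F 1)" shows "coisometry4 (ctrl_by_second F)"
  unfolding coisometry4_def mat4_eq_def
proof (intro allI impI)
  fix i k :: nat assume ik: "i < 4" "k < 4"
  then show "mat4_mult (ctrl_by_second F) (mat4_adj (ctrl_by_second F)) i k = mat4_one i k"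
    using unitary2_rowsD[OF assms(1)] unitary2_rowsD[OF assms(2)] less4_cases[OF ik(1)] less4_cases[OF ik(2)]
    by (elim disjE) (simp_all add: mat4_mult_def mat4_adj_def ctrl_by_second_def mat4_one_def sum_lessThan_4)
qed

lemma coisometry4_ctrl_by_first: assumes "unitary2_rows (F 0)" "unitary2_rows (F 1)" shows "coisometry4 (ctrl_by_first F)"
  unfolding coisometry4_def mat4_eq_def
proof (intro allI impI)
  fix i k :: nat assume ik: "i < 4" "k < 4"
  then show "mat4_mult (ctrl_by_first F) (mat4_adj (ctrl_by_first F)) i k = mat4_one i k"
    using unitary2_rowsD[OF assms(1)] unitary2_rowsD[OF assms(2)] less4_cases[OF ik(1)] less4_cases[OF ik(2)]
    by (elim disjE) (simp_all add: mat4_mult_def mat4_adj_def ctrl_by_first_def mat4_one_def sum_lessThan_4)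
qed

lemma isometry4_ctrl_by_second: assumes "unitary2 (F 0)" "unitary2 (F 1)" shows "isometry4 (ctrl_by_second F)"
  unfolding isometry4_def mat4_eq_def
proof (intro allI impI)
  fix i k :: nat assume ik: "i < 4" "k < 4"
  then show "mat4_mult (mat4_adj (ctrl_by_second F)) (ctrl_by_second F) i k = mat4_one i k"
    using unitary2D[OF assms(1)] unitary2D[OF assms(2)] less4_cases[OF ik(1)] less4_cases[OF ik(2)]
    by (elim disjE) (simp_all add: mat4_mult_def mat4_adj_def ctrl_by_second_def mat4_one_def sum_lessThan_4)
qed

definition perp2 :: "(nat \<Rightarrow> complex) \<Rightarrow> nat \<Rightarrow> complex" where
  "perp2 x = (\<lambda>i. if i = 0 then - cnj (x 1) else cnj (x 0))"
definition unitary_of_col :: "(nat \<Rightarrow> complex) \<Rightarrow> nat \<Rightarrow> nat \<Rightarrow> complex" where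
  "unitary_of_col x = (\<lambda>i j. if j = 0 then x i else perp2 x i)"
definition normalized2 :: "(nat \<Rightarrow> complex) \<Rightarrow> bool" where
  "normalized2 x \<longleftrightarrow> cnj (x 0) * x 0 + cnj (x 1) * x 1 = 1"
definition inner2 :: "(nat \<Rightarrow> complex) \<Rightarrow> (nat \<Rightarrow> complex) \<Rightarrow> complex" where
  "inner2 x y = cnj (x 0) * y 0 + cnj (x 1) * y 1"
definition mat2_vec :: "(nat \<Rightarrow> nat \<Rightarrow> complex) \<Rightarrow> (nat \<Rightarrow> complex) \<Rightarrow> nat \<Rightarrow> complex" where
  "mat2_vec A x = (\<lambda>i. A i 0 * x 0 + A i 1 * x 1)"

lemma unitary_of_col_unitary: assumes "normalized2 x" shows "unitary2 (unitary_of_col x)" "unitary2_rows (unitary_of_col x)"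
  using assms
  by (auto intro!: unitary2I unitary2_rowsI simp: unitary_of_col_def perp2_def normalized2_def algebra_simps)

definition su2_mat :: "complex \<Rightarrow> complex \<Rightarrow> nat \<Rightarrow> nat \<Rightarrow> complex" where
  "su2_mat s t = (\<lambda>y b. if y = 0 then (if b = 0 then s else - cnj t) else (if b = 0 then t else cnj s))"

lemma su2_mat_unitary: assumes "cnj s * s + cnj t * t = 1" shows "unitary2 (su2_mat s t)" "unitary2_rows (su2_mat s t)"
  using assms
  by (auto intro!: unitary2I unitary2_rowsI simp: su2_mat_def algebra_simps)

lemma cnj_mult_self: "cnj z * z = complex_of_real ((cmod z)\<^sup>2)"
  by (metis complex_norm_square mult.commute)

lemma exists_normalized2_multiple:
  assumes "x 0 \<noteq> 0 \<or> x 1 \<noteq> 0"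
  obtains n :: real where "n > 0" "normalized2 (\<lambda>i. x i / complex_of_real n)"
proof -
  define N where "N = (cmod (x 0))\<^sup>2 + (cmod (x 1))\<^sup>2"
  have N0: "N > 0" using assms unfolding N_def by (auto simp: add_pos_nonneg add_nonneg_pos)
  define n where "n = sqrt N"
  have n0: "n > 0" using N0 by (simp add: n_def)
  have n2: "complex_of_real n * complex_of_real n = cnj (x 0) * x 0 + cnj (x 1) * x 1"
    using N0 unfolding n_def N_def by (simp flip: of_real_mult add: cnj_mult_self)
  have "cnj (x 0 / n) * (x 0 / n) + cnj (x 1 / n) * (x 1 / n)
      = (cnj (x 0) * x 0 + cnj (x 1) * x 1) / (complex_of_real n * complex_of_real n)"
    using n0 by (simp add: field_simps)
  also have "\<dots> = 1" using n0 by (simp add: n2[symmetric])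
  finally show ?thesis using n0 that by (simp add: normalized2_def)
qed

lemma exists_root_hermitian_quadratic:
  fixes q :: complex and \<delta> :: real
  shows "\<exists>z. q * z * z - cnj q - complex_of_real \<delta> * z = 0"
proof (cases "q = 0")
  case True
  then show ?thesis by auto
next
  case False
  define d where "d = sqrt (\<delta>\<^sup>2 + 4 * (cmod q)\<^sup>2)"
  define z where "z = complex_of_real (\<delta> + d) / (2 * q)"
  have d2: "d\<^sup>2 = \<delta>\<^sup>2 + 4 * (cmod q)\<^sup>2" unfolding d_def by simp
  have qq: "q * cnj q = complex_of_real ((cmod q)\<^sup>2)" by (metis complex_norm_square)
  have "q * z * z - cnj q - complex_of_real \<delta> * z
      = (complex_of_real ((\<delta> + d)\<^sup>2 - 2 * \<delta> * (\<delta> + d)) - 4 * (q * cnj q)) / (4 * q)"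
    unfolding z_def using False by (simp add: field_simps power2_eq_square)
  also have "complex_of_real ((\<delta> + d)\<^sup>2 - 2 * \<delta> * (\<delta> + d)) = complex_of_real (4 * (cmod q)\<^sup>2)"
    using d2 by (simp add: power2_eq_square algebra_simps)
  finally have "q * z * z - cnj q - complex_of_real \<delta> * z = 0" by (simp add: qq)
  then show ?thesis by blast
qed

lemma exists_unit_vec_orthogonal_images:
  "\<exists>v. normalized2 v \<and> inner2 (mat2_vec A v) (mat2_vec A (perp2 v)) = 0"
proof -
  define p where "p = cnj (A 0 0) * A 0 0 + cnj (A 1 0) * A 1 0"
  define r where "r = cnj (A 0 1) * A 0 1 + cnj (A 1 1) * A 1 1"
  define q where "q = cnj (A 0 0) * A 0 1 + cnj (A 1 0) * A 1 1"
  have key: "inner2 (mat2_vec A v) (mat2_vec A (perp2 v))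
      = q * cnj (v 0) * cnj (v 0) - cnj q * cnj (v 1) * cnj (v 1) + (r - p) * cnj (v 0) * cnj (v 1)" for v
    by (simp add: inner2_def mat2_vec_def perp2_def p_def r_def q_def algebra_simps)
  define \<delta> where "\<delta> = (cmod (A 0 0))\<^sup>2 + (cmod (A 1 0))\<^sup>2 - (cmod (A 0 1))\<^sup>2 - (cmod (A 1 1))\<^sup>2"
  have pr: "r - p = - complex_of_real \<delta>" by (simp add: p_def r_def \<delta>_def cnj_mult_self)
  obtain z where z: "q * z * z - cnj q - complex_of_real \<delta> * z = 0"
    using exists_root_hermitian_quadratic by blast
  define w where "w = (\<lambda>i::nat. if i = 0 then cnj z else 1)"
  obtain n where n: "n > 0" "normalized2 (\<lambda>i. w i / complex_of_real n)"
    using exists_normalized2_multiple[of w] by (auto simp: w_def)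
  have "inner2 (mat2_vec A (\<lambda>i. w i / n)) (mat2_vec A (perp2 (\<lambda>i. w i / n)))
      = (q * z * z - cnj q + (r - p) * z) / (complex_of_real n * complex_of_real n)"
    using n(1) by (simp add: key w_def field_simps)
  also have "\<dots> = 0" using z by (simp add: pr)
  finally show ?thesis using n(2) by blast
qed

lemma exists_unit_vec_orthogonal_pair:
  assumes "inner2 a0 a1 = 0"
  shows "\<exists>u. normalized2 u \<and> inner2 u a1 = 0 \<and> inner2 (perp2 u) a0 = 0"
proof (cases "a1 0 = 0 \<and> a1 1 = 0")
  case False
  then obtain n where n: "n > 0" "normalized2 (\<lambda>i. perp2 a1 i / complex_of_real n)"
    using exists_normalized2_multiple[of "perp2 a1"] by (auto simp: perp2_def)
  have "inner2 (\<lambda>i. perp2 a1 i / n) a1 = 0"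
    using n(1) by (simp add: inner2_def perp2_def field_simps)
  moreover have "inner2 (perp2 (\<lambda>i. perp2 a1 i / n)) a0 = - cnj (inner2 a0 a1) / n"
    using n(1) by (simp add: inner2_def perp2_def field_simps)
  ultimately show ?thesis using n(2) assms by auto
next
  case a1: True
  show ?thesis
  proof (cases "a0 0 = 0 \<and> a0 1 = 0")
    case True
    then show ?thesis using a1
      by (intro exI[of _ "\<lambda>i. if i = 0 then 1 else 0"]) (simp add: normalized2_def inner2_def perp2_def)
  next
    case False
    then obtain n where n: "n > 0" "normalized2 (\<lambda>i. a0 i / complex_of_real n)"
      using exists_normalized2_multiple[of a0] by auto
    have "inner2 (\<lambda>i. a0 i / n) a1 = 0" using a1 by (simp add: inner2_def)
    moreover have "inner2 (perp2 (\<lambda>i. a0 i / n)) a0 = 0"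
      using n(1) by (simp add: inner2_def perp2_def field_simps)
    ultimately show ?thesis using n(2) by blast
  qed
qed

lemma ctrl_product_entry:
  assumes "y1 < 2" "y2 < 2" "a < 2" "b < 2"
  shows "mat4_mult (ctrl_by_second F) (mat4_mult (ctrl_by_first G) (ctrl_by_second H)) (2*y1+y2) (2*a+b) = (\<Sum>q<2. F y2 y1 q * G q y2 b * H b q a)"
  using bit_cases[OF assms(1)] bit_cases[OF assms(2)] bit_cases[OF assms(3)] bit_cases[OF assms(4)]
  by (elim disjE) (simp_all add: mat4_mult_def ctrl_by_second_def ctrl_by_first_def sum_lessThan_4 sum_lessThan_2)

lemma mat_adjoint_entry: assumes "U \<in> carrier_mat 4 4" "i < 4" "j < 4"
  shows "mat_adjoint U $$ (i, j) = cnj (U $$ (j, i))"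
  using assms by (simp add: mat_adjoint_def mat_of_rows_def)

lemma isometry4_of_unitary_mat: assumes "unitary_mat U 4" shows "isometry4 (\<lambda>i k. U $$ (i, k))"
proof -
  have U: "U \<in> carrier_mat 4 4" and I: "mat_adjoint U * U = 1\<^sub>m 4" using assms by (auto simp: unitary_mat_def)
  have da: "dim_row (mat_adjoint U) = 4" "dim_col (mat_adjoint U) = 4" using U by (simp_all add: mat_adjoint_def)
  show ?thesis unfolding isometry4_def mat4_eq_def
  proof (intro allI impI)
    fix i k :: nat assume ik: "i < 4" "k < 4"
    have "(mat_adjoint U * U) $$ (i, k) = (\<Sum>j<4. mat_adjoint U $$ (i, j) * U $$ (j, k))"
      using ik U da by (simp add: scalar_prod_def atLeast0LessThan)
    also have "\<dots> = mat4_mult (mat4_adj (\<lambda>i k. U $$ (i, k))) (\<lambda>i k. U $$ (i, k)) i k"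
      unfolding mat4_mult_def mat4_adj_def using ik U by (intro sum.cong) (simp_all add: mat_adjoint_entry)
    finally show "mat4_mult (mat4_adj (\<lambda>i k. U $$ (i, k))) (\<lambda>i k. U $$ (i, k)) i k = mat4_one i k"
      using I ik by (simp add: mat4_one_def)
  qed
qed

text \<open>With basis index 2 * y1 + y2, such a V maps |a,0> into the span of |a,0> and |a,1>.\<close>

definition keeps_first_qubit_on_b0 :: "mat4 \<Rightarrow> bool" where
  "keeps_first_qubit_on_b0 V \<longleftrightarrow> V 2 0 = 0 \<and> V 3 0 = 0 \<and> V 0 2 = 0 \<and> V 1 2 = 0"

lemma ctrl_by_second_clearing:
  assumes cuU: "isometry4 u"
  obtains W Lf where "unitary2 W" "unitary2_rows W" "\<forall>c<2. unitary2 (Lf c) \<and> unitary2_rows (Lf c)"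
    "keeps_first_qubit_on_b0
       (mat4_mult (mat4_adj (ctrl_by_second Lf)) (mat4_mult u (ctrl_by_second (\<lambda>c. if c = 0 then W else id2))))"
proof -
  define A2 where "A2 = (\<lambda>x a. u (2*x) (2*a))"
  obtain v where v: "normalized2 v" "inner2 (mat2_vec A2 v) (mat2_vec A2 (perp2 v)) = 0"
    using exists_unit_vec_orthogonal_images by blast
  define W where "W = unitary_of_col v"
  have WU: "unitary2 W" "unitary2_rows W" unfolding W_def using unitary_of_col_unitary[OF v(1)] by auto
  define PW where "PW = ctrl_by_second (\<lambda>c. if c = 0 then W else id2)"
  have cuPW: "isometry4 PW" unfolding PW_def by (rule isometry4_ctrl_by_second) (simp_all add: WU id2_unitary)
  define X where "X = mat4_mult u PW"
  have cuX: "isometry4 X" unfolding X_def using cuU cuPW by (rule isometry4_mult)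
  define \<alpha> where "\<alpha> = (\<lambda>a x. X (2*x) (2*a))"
  define \<gamma> where "\<gamma> = (\<lambda>a x. X (2*x+1) (2*a))"
  have ipa: "inner2 (\<alpha> 0) (\<alpha> 1) = 0"
  proof -
    have "inner2 (\<alpha> 0) (\<alpha> 1) = inner2 (mat2_vec A2 v) (mat2_vec A2 (perp2 v))"
      by (simp add: inner2_def \<alpha>_def X_def mat4_mult_def PW_def ctrl_by_second_def W_def unitary_of_col_def
          mat2_vec_def A2_def sum_lessThan_4)
    then show ?thesis using v(2) by simp
  qed
  have ipg: "inner2 (\<gamma> 0) (\<gamma> 1) = 0"
  proof -
    have "mat4_mult (mat4_adj X) X 0 2 = mat4_one 0 2" using cuX by (simp add: isometry4_def mat4_eq_def)
    then have "inner2 (\<alpha> 0) (\<alpha> 1) + inner2 (\<gamma> 0) (\<gamma> 1) = 0"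
      by (simp add: mat4_mult_def mat4_adj_def mat4_one_def sum_lessThan_4 inner2_def \<alpha>_def \<gamma>_def algebra_simps)
    then show ?thesis using ipa by simp
  qed
  obtain u0 where u0: "normalized2 u0" "inner2 u0 (\<alpha> 1) = 0" "inner2 (perp2 u0) (\<alpha> 0) = 0"
    using exists_unit_vec_orthogonal_pair[OF ipa] by blast
  obtain u1 where u1: "normalized2 u1" "inner2 u1 (\<gamma> 1) = 0" "inner2 (perp2 u1) (\<gamma> 0) = 0"
    using exists_unit_vec_orthogonal_pair[OF ipg] by blast
  define Lf where "Lf = (\<lambda>c::nat. if c = 0 then unitary_of_col u0 else unitary_of_col u1)"
  have LU: "\<forall>c<2. unitary2 (Lf c) \<and> unitary2_rows (Lf c)"
    using unitary_of_col_unitary[OF u0(1)] unitary_of_col_unitary[OF u1(1)] by (auto simp: Lf_def)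
  have "keeps_first_qubit_on_b0 (mat4_mult (mat4_adj (ctrl_by_second Lf)) X)"
    using u0(2,3) u1(2,3)
    by (simp add: keeps_first_qubit_on_b0_def mat4_mult_def mat4_adj_def ctrl_by_second_def Lf_def
        unitary_of_col_def sum_lessThan_4 inner2_def \<alpha>_def \<gamma>_def perp2_def)
  then show ?thesis using that WU LU unfolding X_def PW_def by blast
qed

lemma isometry4_fixing_cols_0_2:
  assumes cuK: "isometry4 K" and Kc: "\<And>i. i < 4 \<Longrightarrow> K i 0 = mat4_one i 0 \<and> K i 2 = mat4_one i 2"
  obtains Z where "unitary2 Z" "mat4_eq K (ctrl_by_second (\<lambda>c. if c = 0 then id2 else Z))"
proof -
  have e: "mat4_mult (mat4_adj K) K i k = mat4_one i k" if "i < 4" "k < 4" for i k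
    using cuK that by (simp add: isometry4_def mat4_eq_def)
  have s: "mat4_mult (mat4_adj K) K 0 k = K 0 k" "mat4_mult (mat4_adj K) K 2 k = K 2 k" for k
    using Kc[of 0] Kc[of 1] Kc[of 2] Kc[of 3] by (simp_all add: mat4_mult_def mat4_adj_def sum_lessThan_4 mat4_one_def)
  have Kz: "K 0 1 = 0" "K 0 3 = 0" "K 2 1 = 0" "K 2 3 = 0"
    using e[of 0 1] e[of 0 3] e[of 2 1] e[of 2 3] s by (simp_all add: mat4_one_def)
  define Z where "Z = (\<lambda>x a. K (2*x+1) (2*a+1))"
  have "unitary2 Z"
    using e[of 1 1] e[of 1 3] e[of 3 1] e[of 3 3] Kz
    by (intro unitary2I) (simp_all add: Z_def mat4_mult_def mat4_adj_def mat4_one_def sum_lessThan_4)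
  moreover have "mat4_eq K (ctrl_by_second (\<lambda>c. if c = 0 then id2 else Z))"
    unfolding mat4_eq_def
  proof (intro allI impI)
    fix i k :: nat assume ik: "i < 4" "k < 4"
    show "K i k = ctrl_by_second (\<lambda>c. if c = 0 then id2 else Z) i k"
      using less4_cases[OF ik(1)] less4_cases[OF ik(2)] Kc[of 0] Kc[of 1] Kc[of 2] Kc[of 3] Kz
      by (elim disjE) (simp_all add: ctrl_by_second_def id2_def Z_def mat4_one_def)
  qed
  ultimately show ?thesis by (rule that)
qed

lemma ctrl_by_first_factor:
  assumes cuV: "isometry4 V" and V0: "keeps_first_qubit_on_b0 V"
  obtains Mf Z where "\<forall>c<2. unitary2 (Mf c) \<and> unitary2_rows (Mf c)" "unitary2 Z"
    "mat4_eq V (mat4_mult (ctrl_by_first Mf) (ctrl_by_second (\<lambda>c. if c = 0 then id2 else Z)))"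
proof -
  have V0: "V 0 2 = 0" "V 2 0 = 0" "V 1 2 = 0" "V 3 0 = 0"
    using V0 by (simp_all add: keeps_first_qubit_on_b0_def)
  define \<sigma> where "\<sigma> = (\<lambda>a. V (2*a) (2*a))"
  define \<tau> where "\<tau> = (\<lambda>a. V (2*a+1) (2*a))"
  have Vs: "V 0 0 = \<sigma> 0" "V 2 2 = \<sigma> 1" "V 1 0 = \<tau> 0" "V 3 2 = \<tau> 1"
    by (simp_all add: \<sigma>_def \<tau>_def)
  have n0: "cnj (\<sigma> 0) * \<sigma> 0 + cnj (\<tau> 0) * \<tau> 0 = 1" "cnj (\<sigma> 1) * \<sigma> 1 + cnj (\<tau> 1) * \<tau> 1 = 1"
  proof -
    have "mat4_mult (mat4_adj V) V 0 0 = mat4_one 0 0" "mat4_mult (mat4_adj V) V 2 2 = mat4_one 2 2"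
      using cuV by (simp_all add: isometry4_def mat4_eq_def)
    then show "cnj (\<sigma> 0) * \<sigma> 0 + cnj (\<tau> 0) * \<tau> 0 = 1" "cnj (\<sigma> 1) * \<sigma> 1 + cnj (\<tau> 1) * \<tau> 1 = 1"
      using V0 Vs by (simp_all add: mat4_mult_def mat4_adj_def mat4_one_def sum_lessThan_4)
  qed
  define Mf where "Mf = (\<lambda>a. su2_mat (\<sigma> a) (\<tau> a))"
  have MU: "\<forall>c<2. unitary2 (Mf c) \<and> unitary2_rows (Mf c)"
    using su2_mat_unitary[OF n0(1)] su2_mat_unitary[OF n0(2)] by (auto simp: Mf_def dest!: bit_cases)
  define G0 where "G0 = ctrl_by_first Mf"
  have ruG: "coisometry4 G0" unfolding G0_def by (rule coisometry4_ctrl_by_first) (use MU in auto)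
  define K where "K = mat4_mult (mat4_adj G0) V"
  have G0e: "G0 0 0 = \<sigma> 0" "G0 0 1 = - cnj (\<tau> 0)" "G0 1 0 = \<tau> 0" "G0 1 1 = cnj (\<sigma> 0)"
    "G0 2 2 = \<sigma> 1" "G0 2 3 = - cnj (\<tau> 1)" "G0 3 2 = \<tau> 1" "G0 3 3 = cnj (\<sigma> 1)"
    "G0 0 2 = 0" "G0 0 3 = 0" "G0 1 2 = 0" "G0 1 3 = 0" "G0 2 0 = 0" "G0 2 1 = 0" "G0 3 0 = 0" "G0 3 1 = 0"
    by (simp_all add: G0_def ctrl_by_first_def Mf_def su2_mat_def)
  have "K 0 0 = 1" "K 1 0 = 0" "K 2 0 = 0" "K 3 0 = 0" "K 0 2 = 0" "K 1 2 = 0" "K 2 2 = 1" "K 3 2 = 0"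
    using n0 by (simp_all add: K_def mat4_mult_def mat4_adj_def sum_lessThan_4 G0e V0 Vs algebra_simps)
  then have Kc: "K i 0 = mat4_one i 0 \<and> K i 2 = mat4_one i 2" if "i < 4" for i
    using less4_cases[OF that] by (auto simp: mat4_one_def)
  have cuK: "isometry4 K" unfolding K_def by (rule isometry4_mult[OF isometry4_adj[OF ruG] cuV])
  obtain Z where ZU: "unitary2 Z" and eqK: "mat4_eq K (ctrl_by_second (\<lambda>c. if c = 0 then id2 else Z))"
    using isometry4_fixing_cols_0_2[OF cuK Kc] by blast
  have "mat4_eq V (mat4_mult G0 K)"
    unfolding K_def by (rule mat4_eq_sym[OF coisometry4_cancel_left[OF ruG]])
  then have "mat4_eq V (mat4_mult G0 (ctrl_by_second (\<lambda>c. if c = 0 then id2 else Z)))"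
    by (rule mat4_eq_trans[OF _ mat4_mult_cong[OF mat4_eq_refl eqK]])
  then show ?thesis using that MU ZU unfolding G0_def by blast
qed

lemma ctrl_decomposition:
  assumes "unitary_mat U 4"
  obtains L M R :: "nat \<Rightarrow> nat \<Rightarrow> nat \<Rightarrow> complex"
  where "\<forall>c<2. unitary2 (R c)" "\<forall>c<2. unitary2 (M c)" "\<forall>c<2. unitary2 (L c)"
    "\<And>y1 y2 a b. y1 < 2 \<Longrightarrow> y2 < 2 \<Longrightarrow> a < 2 \<Longrightarrow> b < 2 \<Longrightarrow>
       U $$ (2*y1+y2, 2*a+b) = (\<Sum>q<2. L y2 y1 q * M q y2 b * R b q a)"
proof -
  define u where "u = (\<lambda>i k. U $$ (i, k))"
  have cuU: "isometry4 u" unfolding u_def by (rule isometry4_of_unitary_mat[OF assms])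
  obtain W Lf where WU: "unitary2 W" "unitary2_rows W" and LU: "\<forall>c<2. unitary2 (Lf c) \<and> unitary2_rows (Lf c)"
    and V0: "keeps_first_qubit_on_b0
       (mat4_mult (mat4_adj (ctrl_by_second Lf)) (mat4_mult u (ctrl_by_second (\<lambda>c. if c = 0 then W else id2))))"
    using ctrl_by_second_clearing[OF cuU] by blast
  define PL where "PL = ctrl_by_second Lf"
  define PW where "PW = ctrl_by_second (\<lambda>c. if c = 0 then W else id2)"
  define V where "V = mat4_mult (mat4_adj PL) (mat4_mult u PW)"
  have ruPL: "coisometry4 PL" unfolding PL_def by (rule coisometry4_ctrl_by_second) (use LU in auto)
  have ruPW: "coisometry4 PW" unfolding PW_def by (rule coisometry4_ctrl_by_second) (simp_all add: WU id2_unitary)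
  have cuV: "isometry4 V"
    unfolding V_def PW_def
    by (intro isometry4_mult[OF isometry4_adj[OF ruPL]] isometry4_mult[OF cuU] isometry4_ctrl_by_second)
      (simp_all add: WU id2_unitary)
  obtain Mf Z where MU: "\<forall>c<2. unitary2 (Mf c) \<and> unitary2_rows (Mf c)" and ZU: "unitary2 Z"
    and eqV: "mat4_eq V (mat4_mult (ctrl_by_first Mf) (ctrl_by_second (\<lambda>c. if c = 0 then id2 else Z)))"
    using ctrl_by_first_factor[OF cuV] V0 unfolding V_def PL_def PW_def by blast
  define Rf where "Rf = (\<lambda>c::nat. if c = 0 then (\<lambda>q a. cnj (W a q)) else Z)"
  have RU: "\<forall>c<2. unitary2 (Rf c)"
    using unitary2_rows_adj[OF WU(2)] ZU by (auto simp: Rf_def dest!: bit_cases)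
  have eqR: "mat4_eq (mat4_mult (ctrl_by_second (\<lambda>c. if c = 0 then id2 else Z)) (mat4_adj PW)) (ctrl_by_second Rf)"
    unfolding mat4_eq_def
  proof (intro allI impI)
    fix i k :: nat assume ik: "i < 4" "k < 4"
    show "mat4_mult (ctrl_by_second (\<lambda>c. if c = 0 then id2 else Z)) (mat4_adj PW) i k = ctrl_by_second Rf i k"
      using less4_cases[OF ik(1)] less4_cases[OF ik(2)]
      by (elim disjE) (simp_all add: mat4_mult_def mat4_adj_def PW_def ctrl_by_second_def Rf_def id2_def sum_lessThan_4)
  qed
  have "mat4_eq (mat4_mult PL (mat4_mult (mat4_adj PL) (mat4_mult (mat4_mult u PW) (mat4_adj PW)))) u"
    using mat4_eq_trans[OF coisometry4_cancel_left[OF ruPL] coisometry4_cancel_right[OF ruPW]] .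
  then have u: "mat4_eq u (mat4_mult PL (mat4_mult V (mat4_adj PW)))"
    unfolding V_def by (simp add: mat4_mult_assoc mat4_eq_sym)
  have "mat4_eq (mat4_mult V (mat4_adj PW))
      (mat4_mult (ctrl_by_first Mf) (mat4_mult (ctrl_by_second (\<lambda>c. if c = 0 then id2 else Z)) (mat4_adj PW)))"
    using mat4_mult_cong[OF eqV mat4_eq_refl] by (simp add: mat4_mult_assoc)
  then have "mat4_eq (mat4_mult V (mat4_adj PW)) (mat4_mult (ctrl_by_first Mf) (ctrl_by_second Rf))"
    by (rule mat4_eq_trans[OF _ mat4_mult_cong[OF mat4_eq_refl eqR]])
  then have fin: "mat4_eq u (mat4_mult PL (mat4_mult (ctrl_by_first Mf) (ctrl_by_second Rf)))"
    by (rule mat4_eq_trans[OF u mat4_mult_cong[OF mat4_eq_refl]])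
  have "U $$ (2*y1+y2, 2*a+b) = (\<Sum>q<2. Lf y2 y1 q * Mf q y2 b * Rf b q a)"
    if "y1 < 2" "y2 < 2" "a < 2" "b < 2" for y1 y2 a b
  proof -
    have "2*y1+y2 < 4" "2*a+b < 4" using that by auto
    then have "U $$ (2*y1+y2, 2*a+b) = mat4_mult PL (mat4_mult (ctrl_by_first Mf) (ctrl_by_second Rf)) (2*y1+y2) (2*a+b)"
      using fin by (simp add: mat4_eq_def u_def)
    also have "\<dots> = (\<Sum>q<2. Lf y2 y1 q * Mf q y2 b * Rf b q a)"
      unfolding PL_def by (rule ctrl_product_entry[OF that])
    finally show ?thesis .
  qed
  then show ?thesis using that RU MU LU by blast
qed

section \<open>The grail resource state\<close>

definition bit_at :: "cfg \<Rightarrow> nat \<Rightarrow> nat \<Rightarrow> nat" where "bit_at c w p = c w div 2 ^ p mod 2"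
definition inv_sqrt2 :: complex where "inv_sqrt2 = complex_of_real (1 / sqrt 2)"
definition epr :: "nat \<Rightarrow> nat \<Rightarrow> complex" where "epr x y = (if x = y then inv_sqrt2 else 0)"

lemma node_qubits_grail: "node_qubits 0 = [InQ, EdgeQ 0]" "node_qubits 1 = [InQ, EdgeQ 4, EdgeQ 6]"
  "node_qubits 2 = [EdgeQ 0, EdgeQ 2, EdgeQ 6]" "node_qubits 3 = [EdgeQ 2, EdgeQ 3, EdgeQ 7]"
  "node_qubits 4 = [EdgeQ 4, EdgeQ 5, EdgeQ 7]" "node_qubits 5 = [EdgeQ 1, EdgeQ 5, EdgeQ 8]"
  "node_qubits 6 = [EdgeQ 3, EdgeQ 8]" "node_qubits 7 = [EdgeQ 1]"
  by (simp_all add: node_qubits_def grail_edges_def upt_rec One_nat_def)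

lemma grail_edges_nth: "grail_edges ! 0 = (0,2)" "grail_edges ! 1 = (5,7)" "grail_edges ! 2 = (2,3)"
  "grail_edges ! 3 = (3,6)" "grail_edges ! 4 = (1,4)" "grail_edges ! 5 = (4,5)"
  "grail_edges ! 6 = (2,1)" "grail_edges ! 7 = (3,4)" "grail_edges ! 8 = (6,5)" "length grail_edges = 9"
  by (simp_all add: grail_edges_def)

lemma prod_lessThan_9: "(\<Prod>e<(9::nat). f e) = f 0 * f 1 * f 2 * f 3 * f 4 * f 5 * f 6 * f 7 * (f 8::complex)"
  by (simp add: lessThan_Suc numeral_eq_Suc One_nat_def)

text \<open>stage k F is the global amplitude once nodes 0, ..., k - 1 have measured: the EPR pairs
  not used yet, times F evaluated at the qubits that currently carry the input data.\<close>

definition stage0 :: "(nat \<Rightarrow> nat \<Rightarrow> complex) \<Rightarrow> cfg \<Rightarrow> complex" where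
  "stage0 F c = F (bit_at c 0 0) (bit_at c 1 0) * epr (bit_at c 0 1) (bit_at c 2 0) * epr (bit_at c 5 0) (bit_at c 7 0) * epr (bit_at c 2 1) (bit_at c 3 0)
     * epr (bit_at c 3 1) (bit_at c 6 0) * epr (bit_at c 1 1) (bit_at c 4 0) * epr (bit_at c 4 1) (bit_at c 5 1) * epr (bit_at c 2 2) (bit_at c 1 2)
     * epr (bit_at c 3 2) (bit_at c 4 2) * epr (bit_at c 6 1) (bit_at c 5 2)"

lemma qbit_bit_at: "qbit c 0 InQ = bit_at c 0 0" "qbit c 0 (EdgeQ 0) = bit_at c 0 1"
  "qbit c 1 InQ = bit_at c 1 0" "qbit c 1 (EdgeQ 4) = bit_at c 1 1" "qbit c 1 (EdgeQ 6) = bit_at c 1 2"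
  "qbit c 2 (EdgeQ 0) = bit_at c 2 0" "qbit c 2 (EdgeQ 2) = bit_at c 2 1" "qbit c 2 (EdgeQ 6) = bit_at c 2 2"
  "qbit c 3 (EdgeQ 2) = bit_at c 3 0" "qbit c 3 (EdgeQ 3) = bit_at c 3 1" "qbit c 3 (EdgeQ 7) = bit_at c 3 2"
  "qbit c 4 (EdgeQ 4) = bit_at c 4 0" "qbit c 4 (EdgeQ 5) = bit_at c 4 1" "qbit c 4 (EdgeQ 7) = bit_at c 4 2"
  "qbit c 5 (EdgeQ 1) = bit_at c 5 0" "qbit c 5 (EdgeQ 5) = bit_at c 5 1" "qbit c 5 (EdgeQ 8) = bit_at c 5 2"
  "qbit c 6 (EdgeQ 3) = bit_at c 6 0" "qbit c 6 (EdgeQ 8) = bit_at c 6 1" "qbit c 7 (EdgeQ 1) = bit_at c 7 0"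
  by (simp_all add: qbit_def node_qubits_grail bit_at_def)

lemma epr_eq: "(if x = y then complex_of_real (1 / sqrt 2) else 0) = epr x y"
  by (simp add: epr_def inv_sqrt2_def)

lemma init_amp_stage0: "init_amp \<psi> c = stage0 (\<lambda>a b. \<psi> $ (2 * a + b)) c"
  unfolding init_amp_def stage0_def
  by (simp only: prod_lessThan_9 grail_edges_nth fst_conv snd_conv qbit_bit_at epr_eq mult.assoc)

lemma bit_at_upd: "bit_at (c(v := a)) w 0 = (if w = v then a mod 2 else bit_at c w 0)"
  "bit_at (c(v := a)) w 1 = (if w = v then a div 2 mod 2 else bit_at c w 1)"
  "bit_at (c(v := a)) w 2 = (if w = v then a div 4 mod 2 else bit_at c w 2)"
  by (simp_all add: bit_at_def)

lemma bit_at_cases: "bit_at c w p = 0 \<or> bit_at c w p = 1"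
  by (simp add: bit_at_def) arith

definition stage1 :: "(nat \<Rightarrow> nat \<Rightarrow> complex) \<Rightarrow> cfg \<Rightarrow> complex" where
  "stage1 F c = F (bit_at c 2 0) (bit_at c 1 0) * epr (bit_at c 5 0) (bit_at c 7 0) * epr (bit_at c 2 1) (bit_at c 3 0)
     * epr (bit_at c 3 1) (bit_at c 6 0) * epr (bit_at c 1 1) (bit_at c 4 0) * epr (bit_at c 4 1) (bit_at c 5 1) * epr (bit_at c 2 2) (bit_at c 1 2)
     * epr (bit_at c 3 2) (bit_at c 4 2) * epr (bit_at c 6 1) (bit_at c 5 2)"
definition stage2 :: "(nat \<Rightarrow> nat \<Rightarrow> nat \<Rightarrow> complex) \<Rightarrow> cfg \<Rightarrow> complex" where
  "stage2 F c = F (bit_at c 2 0) (bit_at c 2 2) (bit_at c 4 0) * epr (bit_at c 5 0) (bit_at c 7 0) * epr (bit_at c 2 1) (bit_at c 3 0)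
     * epr (bit_at c 3 1) (bit_at c 6 0) * epr (bit_at c 4 1) (bit_at c 5 1)
     * epr (bit_at c 3 2) (bit_at c 4 2) * epr (bit_at c 6 1) (bit_at c 5 2)"
definition stage3 :: "(nat \<Rightarrow> nat \<Rightarrow> complex) \<Rightarrow> cfg \<Rightarrow> complex" where
  "stage3 F c = F (bit_at c 3 0) (bit_at c 4 0) * epr (bit_at c 5 0) (bit_at c 7 0)
     * epr (bit_at c 3 1) (bit_at c 6 0) * epr (bit_at c 4 1) (bit_at c 5 1)
     * epr (bit_at c 3 2) (bit_at c 4 2) * epr (bit_at c 6 1) (bit_at c 5 2)"
definition stage4 :: "(nat \<Rightarrow> nat \<Rightarrow> nat \<Rightarrow> complex) \<Rightarrow> cfg \<Rightarrow> complex" where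
  "stage4 F c = F (bit_at c 6 0) (bit_at c 4 2) (bit_at c 4 0) * epr (bit_at c 5 0) (bit_at c 7 0)
     * epr (bit_at c 4 1) (bit_at c 5 1) * epr (bit_at c 6 1) (bit_at c 5 2)"
definition stage5 :: "(nat \<Rightarrow> nat \<Rightarrow> complex) \<Rightarrow> cfg \<Rightarrow> complex" where
  "stage5 F c = F (bit_at c 6 0) (bit_at c 5 1) * epr (bit_at c 5 0) (bit_at c 7 0) * epr (bit_at c 6 1) (bit_at c 5 2)"
definition stage6 :: "(nat \<Rightarrow> nat \<Rightarrow> nat \<Rightarrow> complex) \<Rightarrow> cfg \<Rightarrow> complex" where
  "stage6 F c = F (bit_at c 6 0) (bit_at c 6 1) (bit_at c 7 0)"
definition stage7 :: "(nat \<Rightarrow> nat \<Rightarrow> complex) \<Rightarrow> cfg \<Rightarrow> complex" where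
  "stage7 F c = F (c 6) (bit_at c 7 0)"
definition stage8 :: "(nat \<Rightarrow> nat \<Rightarrow> complex) \<Rightarrow> cfg \<Rightarrow> complex" where
  "stage8 F c = F (c 6) (c 7)"

lemma epr_simps: "epr 0 0 = inv_sqrt2" "epr 1 1 = inv_sqrt2" "epr 0 1 = 0" "epr 1 0 = 0"
  by (simp_all add: epr_def)

lemma stage0_measure: "(\<Sum>a<4. t (a mod 2) (a div 2 mod 2) (a div 4 mod 2) * stage0 F (c(0 := a)))
   = inv_sqrt2 * stage1 (\<lambda>x0 b. \<Sum>a<2. t a x0 0 * F a b) c"
  using bit_at_cases[of c 2 0]
  by (elim disjE) (simp_all add: sum_lessThan_4 sum_lessThan_2 stage0_def stage1_def bit_at_upd epr_simps algebra_simps)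

lemma stage1_measure: "(\<Sum>a<8. t (a mod 2) (a div 2 mod 2) (a div 4 mod 2) * stage1 F (c(1 := a)))
   = inv_sqrt2 * inv_sqrt2 * stage2 (\<lambda>x0 x6 x4. \<Sum>b<2. t b x4 x6 * F x0 b) c"
  using bit_at_cases[of c 4 0] bit_at_cases[of c 2 2]
  by (elim disjE) (simp_all add: sum_lessThan_8 sum_lessThan_2 stage1_def stage2_def bit_at_upd epr_simps algebra_simps)

lemma stage2_measure: "(\<Sum>a<8. t (a mod 2) (a div 2 mod 2) (a div 4 mod 2) * stage2 F (c(2 := a)))
   = inv_sqrt2 * stage3 (\<lambda>x2 x4. \<Sum>x0<2. \<Sum>x6<2. t x0 x2 x6 * F x0 x6 x4) c"
  using bit_at_cases[of c 3 0]
  by (elim disjE) (simp_all add: sum_lessThan_8 sum_lessThan_2 stage2_def stage3_def bit_at_upd epr_simps algebra_simps)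

lemma stage3_measure: "(\<Sum>a<8. t (a mod 2) (a div 2 mod 2) (a div 4 mod 2) * stage3 F (c(3 := a)))
   = inv_sqrt2 * inv_sqrt2 * stage4 (\<lambda>x3 x7 x4. \<Sum>x2<2. t x2 x3 x7 * F x2 x4) c"
  using bit_at_cases[of c 6 0] bit_at_cases[of c 4 2]
  by (elim disjE) (simp_all add: sum_lessThan_8 sum_lessThan_2 stage3_def stage4_def bit_at_upd epr_simps algebra_simps)

lemma stage4_measure: "(\<Sum>a<8. t (a mod 2) (a div 2 mod 2) (a div 4 mod 2) * stage4 F (c(4 := a)))
   = inv_sqrt2 * stage5 (\<lambda>x3 x5. \<Sum>x4<2. \<Sum>x7<2. t x4 x5 x7 * F x3 x7 x4) c"
  using bit_at_cases[of c 5 1]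
  by (elim disjE) (simp_all add: sum_lessThan_8 sum_lessThan_2 stage4_def stage5_def bit_at_upd epr_simps algebra_simps)

lemma stage5_measure: "(\<Sum>a<8. t (a mod 2) (a div 2 mod 2) (a div 4 mod 2) * stage5 F (c(5 := a)))
   = inv_sqrt2 * inv_sqrt2 * stage6 (\<lambda>x3 x8 x1. \<Sum>x5<2. t x1 x5 x8 * F x3 x5) c"
  using bit_at_cases[of c 7 0] bit_at_cases[of c 6 1]
  by (elim disjE) (simp_all add: sum_lessThan_8 sum_lessThan_2 stage5_def stage6_def bit_at_upd epr_simps algebra_simps)

lemma stage6_measure: "(\<Sum>a<4. t (a mod 2) (a div 2 mod 2) (a div 4 mod 2) * stage6 F (c(6 := a)))
   = stage7 (\<lambda>y1 x1. \<Sum>x3<2. \<Sum>x8<2. t x3 x8 0 * F x3 x8 x1) c"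
  by (simp add: sum_lessThan_4 sum_lessThan_2 stage6_def stage7_def bit_at_upd algebra_simps)

lemma stage7_measure: "(\<Sum>a<2. t (a mod 2) (a div 2 mod 2) (a div 4 mod 2) * stage7 F (c(7 := a)))
   = stage8 (\<lambda>y1 y2. \<Sum>x1<2. t x1 0 0 * F y1 x1) c"
  by (simp add: sum_lessThan_2 stage7_def stage8_def bit_at_upd algebra_simps)

lemma cnj_inv_sqrt2[simp]: "cnj inv_sqrt2 = inv_sqrt2" by (simp add: inv_sqrt2_def)
lemma inv_sqrt2_sq: "inv_sqrt2 * inv_sqrt2 = 1 / 2"
proof -
  have e: "(1 / sqrt 2) * (1 / sqrt 2) = (1/2::real)" by (simp add: divide_simps)
  have "inv_sqrt2 * inv_sqrt2 = complex_of_real ((1 / sqrt 2) * (1 / sqrt 2))" by (simp only: inv_sqrt2_def of_real_mult)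
  then show ?thesis by (simp only: e) simp
qed

section \<open>Kraus amplitudes of the nodes\<close>

definition xor2 :: "nat \<Rightarrow> nat \<Rightarrow> nat" where "xor2 x y = (x + y) mod 2"
definition neg1_pow :: "nat \<Rightarrow> complex" where "neg1_pow n = (if even n then 1 else -1)"
text \<open>pauli_entry k is the matrix X^(k mod 2) Z^(k div 2) in the computational basis.\<close>

definition pauli_entry :: "nat \<Rightarrow> nat \<Rightarrow> nat \<Rightarrow> complex" where
  "pauli_entry k x q = (if x = xor2 q (k mod 2) then neg1_pow (k div 2 * q) else 0)"

lemma pauli_entry_even: "k mod 2 = 0 \<Longrightarrow> pauli_entry k x q = (if x = q mod 2 then neg1_pow (k div 2 * q) else 0)"
  by (simp add: pauli_entry_def xor2_def)
lemma pauli_entry_odd: "k mod 2 = 1 \<Longrightarrow> pauli_entry k x q = (if x = (q + 1) mod 2 then neg1_pow (k div 2 * q) else 0)"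
  by (simp add: pauli_entry_def xor2_def)
lemma neg1_pow_parity: "even n \<Longrightarrow> neg1_pow n = 1" "odd n \<Longrightarrow> neg1_pow n = -1" by (simp_all add: neg1_pow_def)
lemma neg1_pow_simps: "neg1_pow 0 = 1" "neg1_pow (n * 0) = 1" "neg1_pow (n * 1) = neg1_pow n" "neg1_pow (0 * n) = 1" "neg1_pow (1 * n) = neg1_pow n"
  by (simp_all add: neg1_pow_def)
lemmas pauli_case_simps =
  pauli_entry_even pauli_entry_odd neg1_pow_parity neg1_pow_simps xor2_def iverson_def

lemma mod2_cases: "(n::nat) mod 2 = 0 \<or> n mod 2 = 1" by arith
lemma even_odd_cases: "even (n::nat) \<or> odd n" by simp

lemma cnj_pauli_entry[simp]: "cnj (pauli_entry k x q) = pauli_entry k x q" by (simp add: pauli_entry_def neg1_pow_def)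
lemma cnj_neg1_pow[simp]: "cnj (neg1_pow n) = neg1_pow n" by (simp add: neg1_pow_def)
lemma cnj_iverson[simp]: "cnj (iverson P) = iverson P" by (simp add: iverson_def)
lemma neg1_pow_sq: "neg1_pow n * neg1_pow n = 1" by (simp add: neg1_pow_def)

lemma pauli_entry_orthonormal: assumes "x < 2" "x' < 2" shows "(\<Sum>q<2. pauli_entry k x q * pauli_entry k x' q) = iverson (x = x')"
proof -
  have "x = 0 \<or> x = 1" "x' = 0 \<or> x' = 1" using assms by arith+
  then show ?thesis using mod2_cases[of k] even_odd_cases[of "k div 2"]
    by (elim disjE) (simp_all add: sum_lessThan_2 pauli_entry_even pauli_entry_odd neg1_pow_parity neg1_pow_simps iverson_def)
qed

type_synonym ctrl_gate = "nat \<Rightarrow> nat \<Rightarrow> nat \<Rightarrow> complex"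

text \<open>The Kraus amplitudes of node v: the arguments after the outcome history h are the output
  index (nodes 6 and 7 only) and the bits of the node's qubits in the order of node_qubits.
  The current outcome is h v; the earlier outcomes h w, w < v, select the Pauli corrections.\<close>

definition node0_kraus :: "(nat \<Rightarrow> nat) \<Rightarrow> nat \<Rightarrow> nat \<Rightarrow> complex" where
  "node0_kraus h a x0 = pauli_entry (h 0) x0 a"
definition node1_kraus :: "(nat \<Rightarrow> nat) \<Rightarrow> nat \<Rightarrow> nat \<Rightarrow> nat \<Rightarrow> complex" where
  "node1_kraus h b x4 x6 = iverson (x6 = xor2 b (h 1 mod 2)) * pauli_entry (h 1 div 2) x4 b"
definition node2_kraus :: "ctrl_gate \<Rightarrow> (nat \<Rightarrow> nat) \<Rightarrow> nat \<Rightarrow> nat \<Rightarrow> nat \<Rightarrow> complex" where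
  "node2_kraus R h x0 x2 x6 = (\<Sum>q<2. \<Sum>q0<2. pauli_entry (h 2 div 2) x2 q * R (xor2 x6 (h 1 mod 2)) q q0 * pauli_entry (h 0) x0 q0
      * neg1_pow (h 2 mod 2 * xor2 x6 (h 1 mod 2)))"
definition node3_kraus :: "(nat \<Rightarrow> nat) \<Rightarrow> nat \<Rightarrow> nat \<Rightarrow> nat \<Rightarrow> complex" where
  "node3_kraus h x2 x3 x7 = (\<Sum>q<2. pauli_entry (h 3 div 2) x3 q * iverson (x7 = xor2 q (h 3 mod 2)) * pauli_entry (h 2 div 2) x2 q)"
definition node4_kraus :: "ctrl_gate \<Rightarrow> (nat \<Rightarrow> nat) \<Rightarrow> nat \<Rightarrow> nat \<Rightarrow> nat \<Rightarrow> complex" where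
  "node4_kraus M h x4 x5 x7 = (\<Sum>q<2. \<Sum>q0<2. pauli_entry (h 4 div 2) x5 q * M (xor2 x7 (h 3 mod 2)) q q0 * neg1_pow (h 2 mod 2 * q0)
      * pauli_entry (h 1 div 2) x4 q0 * neg1_pow (h 4 mod 2 * xor2 x7 (h 3 mod 2)))"
definition node5_kraus :: "(nat \<Rightarrow> nat) \<Rightarrow> nat \<Rightarrow> nat \<Rightarrow> nat \<Rightarrow> complex" where
  "node5_kraus h x1 x5 x8 = (\<Sum>q<2. pauli_entry (h 5 div 2) x1 q * iverson (x8 = xor2 q (h 5 mod 2)) * pauli_entry (h 4 div 2) x5 q)"
definition node6_kraus :: "ctrl_gate \<Rightarrow> (nat \<Rightarrow> nat) \<Rightarrow> nat \<Rightarrow> nat \<Rightarrow> nat \<Rightarrow> complex" where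
  "node6_kraus L h y1 x3 x8 = (\<Sum>q0<2. L (xor2 x8 (h 5 mod 2)) y1 q0 * neg1_pow (h 4 mod 2 * q0) * pauli_entry (h 3 div 2) x3 q0
      * neg1_pow (h 6 * xor2 x8 (h 5 mod 2)))"
definition node7_kraus :: "(nat \<Rightarrow> nat) \<Rightarrow> nat \<Rightarrow> nat \<Rightarrow> complex" where
  "node7_kraus h y2 x1 = neg1_pow (h 6 * y2) * pauli_entry (h 5 div 2) x1 y2"

text \<open>amp k is the amplitude F carried by stage k after nodes 0, ..., k - 1 have
  measured with outcomes h; ampk_closed makes the Pauli byproducts of these outcomes explicit.\<close>

definition amp1 :: "(nat \<Rightarrow> nat \<Rightarrow> complex) \<Rightarrow> (nat \<Rightarrow> nat) \<Rightarrow> nat \<Rightarrow> nat \<Rightarrow> complex" where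
  "amp1 ps h x0 b = (\<Sum>a<2. node0_kraus h a x0 * ps a b)"
definition amp2 :: "(nat \<Rightarrow> nat \<Rightarrow> complex) \<Rightarrow> (nat \<Rightarrow> nat) \<Rightarrow> nat \<Rightarrow> nat \<Rightarrow> nat \<Rightarrow> complex" where
  "amp2 ps h x0 x6 x4 = (\<Sum>b<2. node1_kraus h b x4 x6 * amp1 ps h x0 b)"
definition amp3 :: "ctrl_gate \<Rightarrow> (nat \<Rightarrow> nat \<Rightarrow> complex) \<Rightarrow> (nat \<Rightarrow> nat) \<Rightarrow> nat \<Rightarrow> nat \<Rightarrow> complex" where
  "amp3 R ps h x2 x4 = (\<Sum>x0<2. \<Sum>x6<2. node2_kraus R h x0 x2 x6 * amp2 ps h x0 x6 x4)"

definition amp3_closed :: "ctrl_gate \<Rightarrow> (nat \<Rightarrow> nat \<Rightarrow> complex) \<Rightarrow> (nat \<Rightarrow> nat) \<Rightarrow> nat \<Rightarrow> nat \<Rightarrow> complex" where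
  "amp3_closed R ps h x2 x4 = (\<Sum>b<2. \<Sum>q<2. \<Sum>q0<2.
   pauli_entry (h 1 div 2) x4 b * neg1_pow (h 2 mod 2 * b) * pauli_entry (h 2 div 2) x2 q * R b q q0 * ps q0 b)"

lemma amp3_eq_closed: "amp3 R ps h x2 x4 = amp3_closed R ps h x2 x4"
  unfolding amp3_def amp2_def amp1_def amp3_closed_def node2_kraus_def node1_kraus_def node0_kraus_def
  using mod2_cases[of "h 0"] even_odd_cases[of "h 0 div 2"] mod2_cases[of "h 1"]
  apply (simp only: sum_lessThan_2)
  apply (elim disjE)
  apply (simp_all add: pauli_case_simps algebra_simps)
  done

definition amp4 :: "ctrl_gate \<Rightarrow> (nat \<Rightarrow> nat \<Rightarrow> complex) \<Rightarrow> (nat \<Rightarrow> nat) \<Rightarrow> nat \<Rightarrow> nat \<Rightarrow> nat \<Rightarrow> complex" where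
  "amp4 R ps h x3 x7 x4 = (\<Sum>x2<2. node3_kraus h x2 x3 x7 * amp3 R ps h x2 x4)"
definition amp5 :: "ctrl_gate \<Rightarrow> ctrl_gate \<Rightarrow> (nat \<Rightarrow> nat \<Rightarrow> complex) \<Rightarrow> (nat \<Rightarrow> nat) \<Rightarrow> nat \<Rightarrow> nat \<Rightarrow> complex" where
  "amp5 R M ps h x3 x5 = (\<Sum>x4<2. \<Sum>x7<2. node4_kraus M h x4 x5 x7 * amp4 R ps h x3 x7 x4)"
definition amp6 :: "ctrl_gate \<Rightarrow> ctrl_gate \<Rightarrow> (nat \<Rightarrow> nat \<Rightarrow> complex) \<Rightarrow> (nat \<Rightarrow> nat) \<Rightarrow> nat \<Rightarrow> nat \<Rightarrow> nat \<Rightarrow> complex" where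
  "amp6 R M ps h x3 x8 x1 = (\<Sum>x5<2. node5_kraus h x1 x5 x8 * amp5 R M ps h x3 x5)"
definition amp7 :: "ctrl_gate \<Rightarrow> ctrl_gate \<Rightarrow> ctrl_gate \<Rightarrow> (nat \<Rightarrow> nat \<Rightarrow> complex) \<Rightarrow> (nat \<Rightarrow> nat) \<Rightarrow> nat \<Rightarrow> nat \<Rightarrow> complex" where
  "amp7 R M L ps h y1 x1 = (\<Sum>x3<2. \<Sum>x8<2. node6_kraus L h y1 x3 x8 * amp6 R M ps h x3 x8 x1)"
definition amp8 :: "ctrl_gate \<Rightarrow> ctrl_gate \<Rightarrow> ctrl_gate \<Rightarrow> (nat \<Rightarrow> nat \<Rightarrow> complex) \<Rightarrow> (nat \<Rightarrow> nat) \<Rightarrow> nat \<Rightarrow> nat \<Rightarrow> complex" where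
  "amp8 R M L ps h y1 y2 = (\<Sum>x1<2. node7_kraus h y2 x1 * amp7 R M L ps h y1 x1)"

definition amp4_closed :: "ctrl_gate \<Rightarrow> (nat \<Rightarrow> nat \<Rightarrow> complex) \<Rightarrow> (nat \<Rightarrow> nat) \<Rightarrow> nat \<Rightarrow> nat \<Rightarrow> nat \<Rightarrow> complex" where
  "amp4_closed R ps h x3 x7 x4 = (\<Sum>b<2. \<Sum>q<2. \<Sum>q0<2.
   pauli_entry (h 1 div 2) x4 b * neg1_pow (h 2 mod 2 * b) * pauli_entry (h 3 div 2) x3 q * iverson (x7 = xor2 q (h 3 mod 2)) * R b q q0 * ps q0 b)"
definition amp5_closed :: "ctrl_gate \<Rightarrow> ctrl_gate \<Rightarrow> (nat \<Rightarrow> nat \<Rightarrow> complex) \<Rightarrow> (nat \<Rightarrow> nat) \<Rightarrow> nat \<Rightarrow> nat \<Rightarrow> complex" where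
  "amp5_closed R M ps h x3 x5 = (\<Sum>q<2. \<Sum>q'<2. \<Sum>b<2. \<Sum>q0<2.
   pauli_entry (h 3 div 2) x3 q * neg1_pow (h 4 mod 2 * q) * pauli_entry (h 4 div 2) x5 q' * M q q' b * R b q q0 * ps q0 b)"
definition amp6_closed :: "ctrl_gate \<Rightarrow> ctrl_gate \<Rightarrow> (nat \<Rightarrow> nat \<Rightarrow> complex) \<Rightarrow> (nat \<Rightarrow> nat) \<Rightarrow> nat \<Rightarrow> nat \<Rightarrow> nat \<Rightarrow> complex" where
  "amp6_closed R M ps h x3 x8 x1 = (\<Sum>q<2. \<Sum>q'<2. \<Sum>b<2. \<Sum>q0<2.
   pauli_entry (h 3 div 2) x3 q * neg1_pow (h 4 mod 2 * q) * pauli_entry (h 5 div 2) x1 q' * iverson (x8 = xor2 q' (h 5 mod 2))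
     * M q q' b * R b q q0 * ps q0 b)"
definition amp7_closed :: "ctrl_gate \<Rightarrow> ctrl_gate \<Rightarrow> ctrl_gate \<Rightarrow> (nat \<Rightarrow> nat \<Rightarrow> complex) \<Rightarrow> (nat \<Rightarrow> nat) \<Rightarrow> nat \<Rightarrow> nat \<Rightarrow> complex" where
  "amp7_closed R M L ps h y1 x1 = (\<Sum>q'<2. \<Sum>q<2. \<Sum>b<2. \<Sum>q0<2.
   pauli_entry (h 5 div 2) x1 q' * neg1_pow (h 6 * q') * L q' y1 q * M q q' b * R b q q0 * ps q0 b)"
definition amp8_closed :: "ctrl_gate \<Rightarrow> ctrl_gate \<Rightarrow> ctrl_gate \<Rightarrow> (nat \<Rightarrow> nat \<Rightarrow> complex) \<Rightarrow> nat \<Rightarrow> nat \<Rightarrow> complex" where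
  "amp8_closed R M L ps y1 y2 = (\<Sum>q<2. \<Sum>b<2. \<Sum>q0<2.
   L y2 y1 q * M q y2 b * R b q q0 * ps q0 b)"

lemma amp4_eq_closed: "amp4 R ps h x3 x7 x4 = amp4_closed R ps h x3 x7 x4"
  unfolding amp4_def amp3_eq_closed amp3_closed_def amp4_closed_def node3_kraus_def
  using mod2_cases[of "h 2 div 2"] even_odd_cases[of "h 2 div 2 div 2"]
  apply (simp only: sum_lessThan_2)
  apply (elim disjE)
  apply (simp_all add: pauli_case_simps algebra_simps)
  done

lemma amp5_eq_closed: "amp5 R M ps h x3 x5 = amp5_closed R M ps h x3 x5"
  unfolding amp5_def amp4_eq_closed amp4_closed_def amp5_closed_def node4_kraus_def
  using mod2_cases[of "h 1 div 2"] even_odd_cases[of "h 1 div 2 div 2"] mod2_cases[of "h 3"] even_odd_cases[of "h 2 mod 2"]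
  apply (simp only: sum_lessThan_2)
  apply (elim disjE)
  apply (simp_all add: pauli_case_simps algebra_simps)
  done

lemma amp6_eq_closed: "amp6 R M ps h x3 x8 x1 = amp6_closed R M ps h x3 x8 x1"
  unfolding amp6_def amp5_eq_closed amp5_closed_def amp6_closed_def node5_kraus_def
  using mod2_cases[of "h 4 div 2"] even_odd_cases[of "h 4 div 2 div 2"]
  apply (simp only: sum_lessThan_2)
  apply (elim disjE)
  apply (simp_all add: pauli_case_simps algebra_simps)
  done

lemma amp7_eq_closed: "amp7 R M L ps h y1 x1 = amp7_closed R M L ps h y1 x1"
  unfolding amp7_def amp6_eq_closed amp6_closed_def amp7_closed_def node6_kraus_def
  using mod2_cases[of "h 3 div 2"] even_odd_cases[of "h 3 div 2 div 2"] mod2_cases[of "h 5"] even_odd_cases[of "h 4 mod 2"]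
  apply (simp only: sum_lessThan_2)
  apply (elim disjE)
  apply (simp_all add: pauli_case_simps algebra_simps)
  done

lemma amp8_eq_closed: assumes "y2 < 2" shows "amp8 R M L ps h y1 y2 = amp8_closed R M L ps y1 y2"
proof -
  have y: "y2 = 0 \<or> y2 = 1" using assms by arith
  show ?thesis
  unfolding amp8_def amp7_eq_closed amp7_closed_def amp8_closed_def node7_kraus_def
  using mod2_cases[of "h 5 div 2"] even_odd_cases[of "h 5 div 2 div 2"] even_odd_cases[of "h 6"] y
  apply (simp only: sum_lessThan_2)
  apply (elim disjE)
  apply (simp_all add: pauli_case_simps algebra_simps)
  done
qed

section \<open>Completeness of the local instruments\<close>

lemma controlled_isometry_gram:
  fixes m :: "nat \<Rightarrow> nat \<Rightarrow> nat \<Rightarrow> nat \<Rightarrow> complex" and g :: "nat \<Rightarrow> nat \<Rightarrow> nat \<Rightarrow> complex"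
  assumes mc: "\<And>q v w q' v' w'. q < 2 \<Longrightarrow> v < 2 \<Longrightarrow> w < 2 \<Longrightarrow> q' < 2 \<Longrightarrow> v' < 2 \<Longrightarrow> w' < 2 \<Longrightarrow>
     (\<Sum>j<N. cnj (m j q v w) * m j q' v' w') = iverson (q = q' \<and> v = v' \<and> w = w')"
   and gu: "\<And>w u u'. w < 2 \<Longrightarrow> u < 2 \<Longrightarrow> u' < 2 \<Longrightarrow> (\<Sum>q<2. cnj (g w q u) * g w q u') = iverson (u = u')"
   and bits: "u < 2" "v < 2" "w < 2" "u' < 2" "v' < 2" "w' < 2"
  shows "(\<Sum>j<N. cnj (\<Sum>q<2. m j q v w * g w q u) * (\<Sum>q<2. m j q v' w' * g w' q u'))
       = iverson (u = u' \<and> v = v' \<and> w = w')"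
proof -
  have "(\<Sum>j<N. cnj (\<Sum>q<2. m j q v w * g w q u) * (\<Sum>q<2. m j q v' w' * g w' q u'))
     = (\<Sum>j<N. \<Sum>q<2. \<Sum>q'<2. (cnj (g w q u) * g w' q' u') * (cnj (m j q v w) * m j q' v' w'))"
    by (simp add: sum_distrib_left sum_distrib_right mult_ac)
  also have "\<dots> = (\<Sum>q<2. \<Sum>q'<2. \<Sum>j<N. (cnj (g w q u) * g w' q' u') * (cnj (m j q v w) * m j q' v' w'))"
    by (simp add: sum.swap[of _ "{..<N}"])
  also have "\<dots> = (\<Sum>q<2. \<Sum>q'<2. (cnj (g w q u) * g w' q' u') * iverson (q = q' \<and> v = v' \<and> w = w'))"
    by (simp add: sum_distrib_left[symmetric] mc bits)
  also have "\<dots> = iverson (v = v' \<and> w = w') * (\<Sum>q<2. cnj (g w q u) * g w q u')"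
    by (simp add: sum_lessThan_2 iverson_def)
  also have "\<dots> = iverson (u = u' \<and> v = v' \<and> w = w')"
    using gu bits by (auto simp: iverson_def)
  finally show ?thesis .
qed

lemma isometry_compose_gram:
  fixes A P :: "nat \<Rightarrow> nat \<Rightarrow> complex" and x x' :: nat
  assumes A: "\<And>q0 q0'. q0 < 2 \<Longrightarrow> q0' < 2 \<Longrightarrow> (\<Sum>q<2. cnj (A q q0) * A q q0') = iverson (q0 = q0')"
    and P: "\<And>x x'. x < 2 \<Longrightarrow> x' < 2 \<Longrightarrow> (\<Sum>q0<2. cnj (P x q0) * P x' q0) = iverson (x = x')"
    and x: "x < 2" "x' < 2"
  shows "(\<Sum>q<2. cnj (\<Sum>q0<2. A q q0 * P x q0) * (\<Sum>q0<2. A q q0 * P x' q0)) = iverson (x = x')"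
proof -
  have "(\<Sum>q<2. cnj (\<Sum>q0<2. A q q0 * P x q0) * (\<Sum>q0<2. A q q0 * P x' q0))
     = (\<Sum>q<2. \<Sum>q0<2. \<Sum>q0'<2. (cnj (P x q0) * P x' q0') * (cnj (A q q0) * A q q0'))"
    by (simp add: sum_distrib_left sum_distrib_right mult_ac)
  also have "\<dots> = (\<Sum>q0<2. \<Sum>q0'<2. \<Sum>q<2. (cnj (P x q0) * P x' q0') * (cnj (A q q0) * A q q0'))"
    by (simp add: sum_lessThan_2 algebra_simps)
  also have "\<dots> = (\<Sum>q0<2. \<Sum>q0'<2. (cnj (P x q0) * P x' q0') * iverson (q0 = q0'))"
    by (simp add: sum_distrib_left[symmetric] A)
  also have "\<dots> = (\<Sum>q0<2. cnj (P x q0) * P x' q0)"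
    by (simp add: sum_lessThan_2 iverson_def)
  finally show ?thesis using P x by simp
qed

lemma neg1_pow_sq_left: "neg1_pow n * (neg1_pow n * z) = z" by (simp add: neg1_pow_def)

lemma phase_isometry_gram:
  fixes m :: "nat \<Rightarrow> nat \<Rightarrow> complex" and g :: "nat \<Rightarrow> nat \<Rightarrow> nat \<Rightarrow> complex"
  assumes mc: "\<And>w w'. w < 2 \<Longrightarrow> w' < 2 \<Longrightarrow> (\<Sum>j<N. cnj (m j w) * m j w') = iverson (w = w')"
   and gu: "\<And>w u u'. w < 2 \<Longrightarrow> u < 2 \<Longrightarrow> u' < 2 \<Longrightarrow> (\<Sum>i<2. cnj (g w i u) * g w i u') = iverson (u = u')"
   and bits: "u < 2" "w < 2" "u' < 2" "w' < 2"
  shows "(\<Sum>j<N. \<Sum>i<2. cnj (m j w * g w i u) * (m j w' * g w' i u')) = iverson (u = u' \<and> w = w')"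
proof -
  have "(\<Sum>j<N. \<Sum>i<2. cnj (m j w * g w i u) * (m j w' * g w' i u'))
      = (\<Sum>i<2. \<Sum>j<N. (cnj (g w i u) * g w' i u') * (cnj (m j w) * m j w'))"
    by (subst sum.swap) (simp add: mult_ac)
  also have "\<dots> = (\<Sum>i<2. (cnj (g w i u) * g w' i u') * iverson (w = w'))"
    by (simp add: sum_distrib_left[symmetric] mc bits)
  also have "\<dots> = iverson (u = u' \<and> w = w')"
    using gu bits by (auto simp: iverson_def sum_distrib_right[symmetric])
  finally show ?thesis .
qed

lemma pauli_entry_completeness: assumes "q < 2" "v < 2" "q' < 2" "v' < 2"
  shows "(\<Sum>k<4. pauli_entry k v q * pauli_entry k v' q') = 2 * iverson (q = q' \<and> v = v')"
  using bit_cases[OF assms(1)] bit_cases[OF assms(2)] bit_cases[OF assms(3)] bit_cases[OF assms(4)]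
  by (elim disjE) (simp_all add: sum_lessThan_4 pauli_entry_def neg1_pow_def xor2_def iverson_def)

lemma neg1_pow_completeness: assumes "c < 2" "c' < 2"
  shows "(\<Sum>a<2. neg1_pow (a * c) * neg1_pow (a * c')) = 2 * iverson (c = c')"
  using bit_cases[OF assms(1)] bit_cases[OF assms(2)]
  by (elim disjE) (simp_all add: sum_lessThan_2 neg1_pow_def iverson_def)

lemma iverson_xor_completeness: assumes "w < 2" "w' < 2" "q < 2" "q' < 2"
  shows "(\<Sum>a<2. iverson (w = xor2 q a) * iverson (w' = xor2 q' a)) = iverson (xor2 w q = xor2 w' q')"
  using bit_cases[OF assms(1)] bit_cases[OF assms(2)] bit_cases[OF assms(3)] bit_cases[OF assms(4)]
  by (elim disjE) (simp_all add: sum_lessThan_2 xor2_def iverson_def)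

lemma xor2_inj: "w < 2 \<Longrightarrow> w' < 2 \<Longrightarrow> xor2 w m = xor2 w' m \<longleftrightarrow> w = w'"
  by (simp add: xor2_def) arith

lemma xor2_less: "xor2 w m < 2" by (simp add: xor2_def)

text \<open>An outcome j < 8 of a teleporting measurement splits into a Pauli correction j div 2 and
  a bit j mod 2 that either sets a phase or is copied onto an output.\<close>

lemma pauli_phase_gram: assumes "q < 2" "v < 2" "w < 2" "q' < 2" "v' < 2" "w' < 2"
  shows "(\<Sum>j<8. cnj (inv_sqrt2 * inv_sqrt2 * pauli_entry (j div 2) v q * neg1_pow (j mod 2 * xor2 w s)) * (inv_sqrt2 * inv_sqrt2 * pauli_entry (j div 2) v' q' * neg1_pow (j mod 2 * xor2 w' s)))
     = iverson (q = q' \<and> v = v' \<and> w = w')"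
proof -
  have "(\<Sum>j<8. cnj (inv_sqrt2 * inv_sqrt2 * pauli_entry (j div 2) v q * neg1_pow (j mod 2 * xor2 w s)) * (inv_sqrt2 * inv_sqrt2 * pauli_entry (j div 2) v' q' * neg1_pow (j mod 2 * xor2 w' s)))
     = (\<Sum>a<2. \<Sum>k<4. (inv_sqrt2 * inv_sqrt2 * (inv_sqrt2 * inv_sqrt2)) * ((pauli_entry k v q * pauli_entry k v' q') * (neg1_pow (a * xor2 w s) * neg1_pow (a * xor2 w' s))))"
  proof -
    have "(\<Sum>j<8. cnj (inv_sqrt2 * inv_sqrt2 * pauli_entry (j div 2) v q * neg1_pow (j mod 2 * xor2 w s)) * (inv_sqrt2 * inv_sqrt2 * pauli_entry (j div 2) v' q' * neg1_pow (j mod 2 * xor2 w' s)))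
      = (\<Sum>a<2. \<Sum>k<4. cnj (inv_sqrt2 * inv_sqrt2 * pauli_entry k v q * neg1_pow (a * xor2 w s)) * (inv_sqrt2 * inv_sqrt2 * pauli_entry k v' q' * neg1_pow (a * xor2 w' s)))"
      by (simp add: sum_lessThan_8 sum_lessThan_4 sum_lessThan_2)
    then show ?thesis by (simp add: mult_ac)
  qed
  also have "\<dots> = (inv_sqrt2 * inv_sqrt2 * (inv_sqrt2 * inv_sqrt2)) * ((\<Sum>k<4. pauli_entry k v q * pauli_entry k v' q') * (\<Sum>a<2. neg1_pow (a * xor2 w s) * neg1_pow (a * xor2 w' s)))"
    by (simp add: sum_distrib_left sum_distrib_right mult_ac)
  also have "\<dots> = iverson (q = q' \<and> v = v' \<and> w = w')"
    using assms by (simp add: pauli_entry_completeness neg1_pow_completeness xor2_less xor2_inj inv_sqrt2_sq iverson_def)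
  finally show ?thesis .
qed

lemma pauli_copy_gram: assumes "q < 2" "v < 2" "w < 2" "q' < 2" "v' < 2" "w' < 2"
  shows "(\<Sum>j<8. cnj (inv_sqrt2 * pauli_entry (j div 2) v q * iverson (w = xor2 q (j mod 2))) * (inv_sqrt2 * pauli_entry (j div 2) v' q' * iverson (w' = xor2 q' (j mod 2))))
     = iverson (q = q' \<and> v = v' \<and> w = w')"
proof -
  have "(\<Sum>j<8. cnj (inv_sqrt2 * pauli_entry (j div 2) v q * iverson (w = xor2 q (j mod 2))) * (inv_sqrt2 * pauli_entry (j div 2) v' q' * iverson (w' = xor2 q' (j mod 2))))
     = (\<Sum>a<2. \<Sum>k<4. (inv_sqrt2 * inv_sqrt2) * ((pauli_entry k v q * pauli_entry k v' q') * (iverson (w = xor2 q a) * iverson (w' = xor2 q' a))))"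
  proof -
    have "(\<Sum>j<8. cnj (inv_sqrt2 * pauli_entry (j div 2) v q * iverson (w = xor2 q (j mod 2))) * (inv_sqrt2 * pauli_entry (j div 2) v' q' * iverson (w' = xor2 q' (j mod 2))))
      = (\<Sum>a<2. \<Sum>k<4. cnj (inv_sqrt2 * pauli_entry k v q * iverson (w = xor2 q a)) * (inv_sqrt2 * pauli_entry k v' q' * iverson (w' = xor2 q' a)))"
      by (simp add: sum_lessThan_8 sum_lessThan_4 sum_lessThan_2)
    then show ?thesis by (simp add: mult_ac)
  qed
  also have "\<dots> = (inv_sqrt2 * inv_sqrt2) * ((\<Sum>k<4. pauli_entry k v q * pauli_entry k v' q') * (\<Sum>a<2. iverson (w = xor2 q a) * iverson (w' = xor2 q' a)))"
    by (simp add: sum_distrib_left sum_distrib_right mult_ac)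
  also have "\<dots> = iverson (q = q' \<and> v = v' \<and> w = w')"
    using assms by (simp add: pauli_entry_completeness iverson_xor_completeness inv_sqrt2_sq) (auto simp: iverson_def xor2_inj)
  finally show ?thesis .
qed

lemma signed_pauli_entry_orthonormal: "x < 2 \<Longrightarrow> x' < 2 \<Longrightarrow> (\<Sum>q0<2. cnj (neg1_pow (n * q0) * pauli_entry k x q0) * (neg1_pow (n * q0) * pauli_entry k x' q0)) = iverson (x = x')"
proof -
  assume a: "x < 2" "x' < 2"
  have "(\<Sum>q0<2. cnj (neg1_pow (n * q0) * pauli_entry k x q0) * (neg1_pow (n * q0) * pauli_entry k x' q0)) = (\<Sum>q0<2. pauli_entry k x q0 * pauli_entry k x' q0)"
    by (intro sum.cong refl) (simp add: mult_ac neg1_pow_sq neg1_pow_sq_left)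
  then show ?thesis using a by (simp add: pauli_entry_orthonormal)
qed

lemma node0_kraus_gram: assumes b: "p0 < 2" "p1 < 2" "p0' < 2" "p1' < 2"
  shows "(\<Sum>j<4. cnj (inv_sqrt2 * node0_kraus (h(0 := j)) p0 p1) * (inv_sqrt2 * node0_kraus (h(0 := j)) p0' p1')) = iverson (p0 = p0' \<and> p1 = p1')"
proof -
  have "(\<Sum>j<4. cnj (inv_sqrt2 * node0_kraus (h(0 := j)) p0 p1) * (inv_sqrt2 * node0_kraus (h(0 := j)) p0' p1'))
     = inv_sqrt2 * inv_sqrt2 * (\<Sum>k<4. pauli_entry k p1 p0 * pauli_entry k p1' p0')"
    by (simp add: node0_kraus_def sum_distrib_left mult_ac)
  also have "\<dots> = iverson (p0 = p0' \<and> p1 = p1')" using b by (simp add: pauli_entry_completeness inv_sqrt2_sq iverson_def)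
  finally show ?thesis .
qed

lemma node1_kraus_gram: assumes b: "p0 < 2" "p1 < 2" "p2 < 2" "p0' < 2" "p1' < 2" "p2' < 2"
  shows "(\<Sum>j<8. cnj (inv_sqrt2 * node1_kraus (h(1 := j)) p0 p1 p2) * (inv_sqrt2 * node1_kraus (h(1 := j)) p0' p1' p2'))
     = iverson (p0 = p0' \<and> p1 = p1' \<and> p2 = p2')"
proof -
  have "(\<Sum>j<8. cnj (inv_sqrt2 * node1_kraus (h(1 := j)) p0 p1 p2) * (inv_sqrt2 * node1_kraus (h(1 := j)) p0' p1' p2'))
     = (\<Sum>j<8. cnj (inv_sqrt2 * pauli_entry (j div 2) p1 p0 * iverson (p2 = xor2 p0 (j mod 2))) * (inv_sqrt2 * pauli_entry (j div 2) p1' p0' * iverson (p2' = xor2 p0' (j mod 2))))"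
    by (intro sum.cong refl) (simp add: node1_kraus_def mult_ac)
  also have "\<dots> = iverson (p0 = p0' \<and> p1 = p1' \<and> p2 = p2')" using pauli_copy_gram[OF b(1,2,3,4,5,6)] .
  finally show ?thesis .
qed

lemma node2_kraus_gram: assumes U: "\<forall>c<2. unitary2 (R c)" and b: "p0 < 2" "p1 < 2" "p2 < 2" "p0' < 2" "p1' < 2" "p2' < 2"
  shows "(\<Sum>j<8. cnj (inv_sqrt2 * inv_sqrt2 * node2_kraus R (h(2 := j)) p0 p1 p2) * (inv_sqrt2 * inv_sqrt2 * node2_kraus R (h(2 := j)) p0' p1' p2'))
     = iverson (p0 = p0' \<and> p1 = p1' \<and> p2 = p2')"
proof -
  let ?m = "\<lambda>j q v w. inv_sqrt2 * inv_sqrt2 * pauli_entry (j div 2) v q * neg1_pow (j mod 2 * xor2 w (h 1 mod 2))"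
  let ?g = "\<lambda>w q u. \<Sum>q0<2. R (xor2 w (h 1 mod 2)) q q0 * pauli_entry (h 0) u q0"
  have eq: "inv_sqrt2 * inv_sqrt2 * node2_kraus R (h(2 := j)) x0 x2 x6 = (\<Sum>q<2. ?m j q x2 x6 * ?g x6 q x0)" for j x0 x2 x6
    by (simp add: node2_kraus_def sum_lessThan_2 algebra_simps)
  show ?thesis unfolding eq
  proof (rule controlled_isometry_gram[where m = ?m and g = ?g])
    show "(\<Sum>j<8. cnj (?m j q v w) * ?m j q' v' w') = iverson (q = q' \<and> v = v' \<and> w = w')"
      if "q < 2" "v < 2" "w < 2" "q' < 2" "v' < 2" "w' < 2" for q v w q' v' w'
      using pauli_phase_gram[OF that] by simp
    show "(\<Sum>q<2. cnj (?g w q u) * ?g w q u') = iverson (u = u')" if "w < 2" "u < 2" "u' < 2" for w u u'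
    proof (rule isometry_compose_gram)
      show "(\<Sum>q<2. cnj (R (xor2 w (h 1 mod 2)) q q0) * R (xor2 w (h 1 mod 2)) q q0') = iverson (q0 = q0')"
        if "q0 < 2" "q0' < 2" for q0 q0'
        using U xor2_less[of w "h 1 mod 2"] that unfolding unitary2_def by blast
      show "(\<Sum>q0<2. cnj (pauli_entry (h 0) x q0) * pauli_entry (h 0) x' q0) = iverson (x = x')" if "x < 2" "x' < 2" for x x'
        using that by (simp add: pauli_entry_orthonormal)
    qed (use that in auto)
  qed (use b in auto)
qed

lemma node3_kraus_gram: assumes b: "p0 < 2" "p1 < 2" "p2 < 2" "p0' < 2" "p1' < 2" "p2' < 2"
  shows "(\<Sum>j<8. cnj (inv_sqrt2 * node3_kraus (h(3 := j)) p0 p1 p2) * (inv_sqrt2 * node3_kraus (h(3 := j)) p0' p1' p2'))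
     = iverson (p0 = p0' \<and> p1 = p1' \<and> p2 = p2')"
proof -
  let ?m = "\<lambda>j q v w. inv_sqrt2 * pauli_entry (j div 2) v q * iverson (w = xor2 q (j mod 2))"
  let ?g = "\<lambda>w q u. pauli_entry (h 2 div 2) u q"
  have eq: "inv_sqrt2 * node3_kraus (h(3 := j)) x2 x3 x7 = (\<Sum>q<2. ?m j q x3 x7 * ?g x7 q x2)" for j x2 x3 x7
    by (simp add: node3_kraus_def sum_lessThan_2 algebra_simps)
  show ?thesis unfolding eq
  proof (rule controlled_isometry_gram[where m = ?m and g = ?g])
    show "(\<Sum>j<8. cnj (?m j q v w) * ?m j q' v' w') = iverson (q = q' \<and> v = v' \<and> w = w')"
      if "q < 2" "v < 2" "w < 2" "q' < 2" "v' < 2" "w' < 2" for q v w q' v' w'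
      using pauli_copy_gram[OF that] by simp
    show "(\<Sum>q<2. cnj (?g w q u) * ?g w q u') = iverson (u = u')" if "w < 2" "u < 2" "u' < 2" for w u u'
      using that by (simp add: pauli_entry_orthonormal)
  qed (use b in auto)
qed

lemma node4_kraus_gram: assumes U: "\<forall>c<2. unitary2 (M c)" and b: "p0 < 2" "p1 < 2" "p2 < 2" "p0' < 2" "p1' < 2" "p2' < 2"
  shows "(\<Sum>j<8. cnj (inv_sqrt2 * inv_sqrt2 * node4_kraus M (h(4 := j)) p0 p1 p2) * (inv_sqrt2 * inv_sqrt2 * node4_kraus M (h(4 := j)) p0' p1' p2'))
     = iverson (p0 = p0' \<and> p1 = p1' \<and> p2 = p2')"
proof -
  let ?m = "\<lambda>j q v w. inv_sqrt2 * inv_sqrt2 * pauli_entry (j div 2) v q * neg1_pow (j mod 2 * xor2 w (h 3 mod 2))"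
  let ?g = "\<lambda>w q u. \<Sum>q0<2. M (xor2 w (h 3 mod 2)) q q0 * (neg1_pow (h 2 mod 2 * q0) * pauli_entry (h 1 div 2) u q0)"
  have eq: "inv_sqrt2 * inv_sqrt2 * node4_kraus M (h(4 := j)) x4 x5 x7 = (\<Sum>q<2. ?m j q x5 x7 * ?g x7 q x4)" for j x4 x5 x7
    by (simp add: node4_kraus_def sum_lessThan_2 algebra_simps)
  show ?thesis unfolding eq
  proof (rule controlled_isometry_gram[where m = ?m and g = ?g])
    show "(\<Sum>j<8. cnj (?m j q v w) * ?m j q' v' w') = iverson (q = q' \<and> v = v' \<and> w = w')"
      if "q < 2" "v < 2" "w < 2" "q' < 2" "v' < 2" "w' < 2" for q v w q' v' w'
      using pauli_phase_gram[OF that] by simp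
    show "(\<Sum>q<2. cnj (?g w q u) * ?g w q u') = iverson (u = u')" if "w < 2" "u < 2" "u' < 2" for w u u'
    proof (rule isometry_compose_gram)
      show "(\<Sum>q<2. cnj (M (xor2 w (h 3 mod 2)) q q0) * M (xor2 w (h 3 mod 2)) q q0') = iverson (q0 = q0')"
        if "q0 < 2" "q0' < 2" for q0 q0'
        using U xor2_less[of w "h 3 mod 2"] that unfolding unitary2_def by blast
      show "(\<Sum>q0<2. cnj (neg1_pow (h 2 mod 2 * q0) * pauli_entry (h 1 div 2) x q0) * (neg1_pow (h 2 mod 2 * q0) * pauli_entry (h 1 div 2) x' q0)) = iverson (x = x')"
        if "x < 2" "x' < 2" for x x'
        using signed_pauli_entry_orthonormal[OF that] .
    qed (use that in auto)
  qed (use b in auto)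
qed

lemma node5_kraus_gram: assumes b: "p0 < 2" "p1 < 2" "p2 < 2" "p0' < 2" "p1' < 2" "p2' < 2"
  shows "(\<Sum>j<8. cnj (inv_sqrt2 * node5_kraus (h(5 := j)) p0 p1 p2) * (inv_sqrt2 * node5_kraus (h(5 := j)) p0' p1' p2'))
     = iverson (p0 = p0' \<and> p1 = p1' \<and> p2 = p2')"
proof -
  let ?m = "\<lambda>j q v w. inv_sqrt2 * pauli_entry (j div 2) v q * iverson (w = xor2 q (j mod 2))"
  let ?g = "\<lambda>w q u. pauli_entry (h 4 div 2) u q"
  have eq: "inv_sqrt2 * node5_kraus (h(5 := j)) x1 x5 x8 = (\<Sum>q<2. ?m j q x1 x8 * ?g x8 q x5)" for j x1 x5 x8
    by (simp add: node5_kraus_def sum_lessThan_2 algebra_simps)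
  have "(\<Sum>j<8. cnj (\<Sum>q<2. ?m j q p0 p2 * ?g p2 q p1) * (\<Sum>q<2. ?m j q p0' p2' * ?g p2' q p1'))
     = iverson (p1 = p1' \<and> p0 = p0' \<and> p2 = p2')"
  proof (rule controlled_isometry_gram[where m = ?m and g = ?g])
    show "(\<Sum>j<8. cnj (?m j q v w) * ?m j q' v' w') = iverson (q = q' \<and> v = v' \<and> w = w')"
      if "q < 2" "v < 2" "w < 2" "q' < 2" "v' < 2" "w' < 2" for q v w q' v' w'
      using pauli_copy_gram[OF that] by simp
    show "(\<Sum>q<2. cnj (?g w q u) * ?g w q u') = iverson (u = u')" if "w < 2" "u < 2" "u' < 2" for w u u'
      using that by (simp add: pauli_entry_orthonormal)
  qed (use b in auto)
  then show ?thesis unfolding eq by (simp add: iverson_def conj_ac)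
qed

lemma node6_kraus_gram: assumes U: "\<forall>c<2. unitary2 (L c)" and b: "p0 < 2" "p1 < 2" "p0' < 2" "p1' < 2"
  shows "(\<Sum>j<2. \<Sum>i<2. cnj (inv_sqrt2 * node6_kraus L (h(6 := j)) i p0 p1) * (inv_sqrt2 * node6_kraus L (h(6 := j)) i p0' p1'))
     = iverson (p0 = p0' \<and> p1 = p1')"
proof -
  let ?m = "\<lambda>j w. inv_sqrt2 * neg1_pow (j * xor2 w (h 5 mod 2))"
  let ?g = "\<lambda>w i u. \<Sum>q0<2. L (xor2 w (h 5 mod 2)) i q0 * (neg1_pow (h 4 mod 2 * q0) * pauli_entry (h 3 div 2) u q0)"
  have eq: "inv_sqrt2 * node6_kraus L (h(6 := j)) i x3 x8 = ?m j x8 * ?g x8 i x3" for j i x3 x8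
    by (simp add: node6_kraus_def sum_lessThan_2 algebra_simps)
  have "(\<Sum>j<2. \<Sum>i<2. cnj (?m j p1 * ?g p1 i p0) * (?m j p1' * ?g p1' i p0')) = iverson (p0 = p0' \<and> p1 = p1')"
  proof (rule phase_isometry_gram[where m = ?m and g = ?g])
    show "(\<Sum>j<2. cnj (?m j w) * ?m j w') = iverson (w = w')" if "w < 2" "w' < 2" for w w'
      using bit_cases[OF that(1)] bit_cases[OF that(2)] mod2_cases[of "h 5"]
      by (elim disjE) (simp_all add: sum_lessThan_2 neg1_pow_def xor2_def iverson_def inv_sqrt2_sq)
    show "(\<Sum>i<2. cnj (?g w i u) * ?g w i u') = iverson (u = u')" if "w < 2" "u < 2" "u' < 2" for w u u'
    proof (rule isometry_compose_gram)
      show "(\<Sum>q<2. cnj (L (xor2 w (h 5 mod 2)) q q0) * L (xor2 w (h 5 mod 2)) q q0') = iverson (q0 = q0')"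
        if "q0 < 2" "q0' < 2" for q0 q0'
        using U xor2_less[of w "h 5 mod 2"] that unfolding unitary2_def by blast
      show "(\<Sum>q0<2. cnj (neg1_pow (h 4 mod 2 * q0) * pauli_entry (h 3 div 2) x q0) * (neg1_pow (h 4 mod 2 * q0) * pauli_entry (h 3 div 2) x' q0)) = iverson (x = x')"
        if "x < 2" "x' < 2" for x x'
        using signed_pauli_entry_orthonormal[OF that] .
    qed (use that in auto)
  qed (use b in auto)
  then show ?thesis unfolding eq .
qed

lemma node7_kraus_gram: assumes b: "p0 < 2" "p0' < 2"
  shows "(\<Sum>i<2. cnj (node7_kraus (h(7 := 0)) i p0) * node7_kraus (h(7 := 0)) i p0') = iverson (p0 = p0')"
proof -
  have "(\<Sum>i<2. cnj (node7_kraus (h(7 := 0)) i p0) * node7_kraus (h(7 := 0)) i p0')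
      = (\<Sum>i<2. pauli_entry (h 5 div 2) p0 i * pauli_entry (h 5 div 2) p0' i)"
    by (intro sum.cong refl) (simp add: node7_kraus_def mult_ac neg1_pow_sq neg1_pow_sq_left)
  then show ?thesis using b by (simp add: pauli_entry_orthonormal)
qed

definition kraus_scale :: "nat \<Rightarrow> complex" where "kraus_scale v = [inv_sqrt2, inv_sqrt2, inv_sqrt2*inv_sqrt2, inv_sqrt2, inv_sqrt2*inv_sqrt2, inv_sqrt2, inv_sqrt2, 1] ! v"
definition outcomes :: "nat \<Rightarrow> nat" where "outcomes v = [4, 8, 8, 8, 8, 8, 2, 1] ! v"
definition node_kraus :: "ctrl_gate \<Rightarrow> ctrl_gate \<Rightarrow> ctrl_gate \<Rightarrow> nat \<Rightarrow> (nat \<Rightarrow> nat) \<Rightarrow> nat \<Rightarrow> nat \<Rightarrow> nat \<Rightarrow> nat \<Rightarrow> complex" where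
  "node_kraus R M L v h i p0 p1 p2 = (if v = 0 then node0_kraus h p0 p1 else if v = 1 then node1_kraus h p0 p1 p2
     else if v = 2 then node2_kraus R h p0 p1 p2 else if v = 3 then node3_kraus h p0 p1 p2
     else if v = 4 then node4_kraus M h p0 p1 p2 else if v = 5 then node5_kraus h p0 p1 p2
     else if v = 6 then node6_kraus L h i p0 p1 else node7_kraus h i p0)"
definition grail_kraus :: "ctrl_gate \<Rightarrow> ctrl_gate \<Rightarrow> ctrl_gate \<Rightarrow> nat \<Rightarrow> (nat \<Rightarrow> nat) \<Rightarrow> nat \<Rightarrow> complex mat" where
  "grail_kraus R M L v h j = mat (Dout v) (D0 v) (\<lambda>(i, a). kraus_scale v * node_kraus R M L v (h(v := j)) i (a mod 2) (a div 2 mod 2) (a div 4 mod 2))"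

lemma D0_vals: "D0 0 = 4" "D0 1 = 8" "D0 2 = 8" "D0 3 = 8" "D0 4 = 8" "D0 5 = 8" "D0 6 = 4" "D0 7 = 2"
  by (simp_all add: D0_def num_nodes_def node_qubits_grail)
lemma Dout_vals: "Dout 0 = 1" "Dout 1 = 1" "Dout 2 = 1" "Dout 3 = 1" "Dout 4 = 1" "Dout 5 = 1" "Dout 6 = 2" "Dout 7 = 2"
  by (simp_all add: Dout_def)

lemma delta_of_bits8: fixes a b :: nat and F :: "nat \<Rightarrow> nat \<Rightarrow> nat \<Rightarrow> nat \<Rightarrow> nat \<Rightarrow> nat \<Rightarrow> complex"
  assumes "\<And>x y z x' y' z'. x < 2 \<Longrightarrow> y < 2 \<Longrightarrow> z < 2 \<Longrightarrow> x' < 2 \<Longrightarrow> y' < 2 \<Longrightarrow> z' < 2 \<Longrightarrow>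
     F x y z x' y' z' = iverson (x = x' \<and> y = y' \<and> z = z')"
  and "a < 8" "b < 8"
  shows "F (a mod 2) (a div 2 mod 2) (a div 4 mod 2) (b mod 2) (b div 2 mod 2) (b div 4 mod 2) = (if a = b then 1 else 0)"
  using less8_cases[OF assms(2)] less8_cases[OF assms(3)] by (elim disjE) (simp_all add: assms(1) iverson_def)

lemma delta_of_bits4: fixes a b :: nat and F :: "nat \<Rightarrow> nat \<Rightarrow> nat \<Rightarrow> nat \<Rightarrow> nat \<Rightarrow> nat \<Rightarrow> complex"
  assumes "\<And>x y x' y'. x < 2 \<Longrightarrow> y < 2 \<Longrightarrow> x' < 2 \<Longrightarrow> y' < 2 \<Longrightarrow>
     F x y 0 x' y' 0 = iverson (x = x' \<and> y = y')"
  and "a < 4" "b < 4"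
  shows "F (a mod 2) (a div 2 mod 2) (a div 4 mod 2) (b mod 2) (b div 2 mod 2) (b div 4 mod 2) = (if a = b then 1 else 0)"
  using less4_cases[OF assms(2)] less4_cases[OF assms(3)] by (elim disjE) (simp_all add: assms(1) iverson_def)

lemma delta_of_bits2: fixes a b :: nat and F :: "nat \<Rightarrow> nat \<Rightarrow> nat \<Rightarrow> nat \<Rightarrow> nat \<Rightarrow> nat \<Rightarrow> complex"
  assumes "\<And>x x'. x < 2 \<Longrightarrow> x' < 2 \<Longrightarrow> F x 0 0 x' 0 0 = iverson (x = x')"
  and "a < 2" "b < 2"
  shows "F (a mod 2) (a div 2 mod 2) (a div 4 mod 2) (b mod 2) (b div 2 mod 2) (b div 4 mod 2) = (if a = b then 1 else 0)"
  using bit_cases[OF assms(2)] bit_cases[OF assms(3)] by (elim disjE) (simp_all add: assms(1) iverson_def)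

definition node_gram :: "ctrl_gate \<Rightarrow> ctrl_gate \<Rightarrow> ctrl_gate \<Rightarrow> nat \<Rightarrow> (nat \<Rightarrow> nat) \<Rightarrow> nat \<Rightarrow> nat \<Rightarrow> complex" where
  "node_gram R M L v h a b = (\<Sum>j<outcomes v. \<Sum>i<Dout v.
     cnj (kraus_scale v * node_kraus R M L v (h(v := j)) i (a mod 2) (a div 2 mod 2) (a div 4 mod 2))
     * (kraus_scale v * node_kraus R M L v (h(v := j)) i (b mod 2) (b div 2 mod 2) (b div 4 mod 2)))"

lemma grail_kraus_completeI:
  assumes "\<And>a b. a < D0 v \<Longrightarrow> b < D0 v \<Longrightarrow> node_gram R M L v h a b = (if a = b then 1 else 0)"
  shows "kraus_complete (outcomes v) (D0 v) (Dout v) (grail_kraus R M L v h)"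
  unfolding kraus_complete_def
proof (intro conjI allI impI)
  show "grail_kraus R M L v h j \<in> carrier_mat (Dout v) (D0 v)" for j by (simp add: grail_kraus_def)
  fix a b assume a: "a < D0 v" and b: "b < D0 v"
  have "(\<Sum>j<outcomes v. \<Sum>i<Dout v. cnj (grail_kraus R M L v h j $$ (i, a)) * grail_kraus R M L v h j $$ (i, b))
      = node_gram R M L v h a b"
    unfolding node_gram_def using a b by (intro sum.cong refl) (simp add: grail_kraus_def)
  then show "(\<Sum>j<outcomes v. \<Sum>i<Dout v. cnj (grail_kraus R M L v h j $$ (i, a)) * grail_kraus R M L v h j $$ (i, b))
      = (if a = b then 1 else 0)"
    using assms[OF a b] by simp
qed

lemma node0_gram:
  assumes "a < D0 0" "b < D0 0"
  shows "node_gram R M L 0 h a b = (if a = b then 1 else 0)"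
proof -
  have "node_gram R M L 0 h a b = (\<Sum>j<4. cnj (inv_sqrt2 * node0_kraus (h(0 := j)) (a mod 2) (a div 2 mod 2)) * (inv_sqrt2 * node0_kraus (h(0 := j)) (b mod 2) (b div 2 mod 2)))"
    by (simp add: node_gram_def outcomes_def kraus_scale_def node_kraus_def Dout_vals sum_lessThan_1)
  also have "\<dots> = (if a = b then 1 else 0)"
    using assms by (intro delta_of_bits4[where F = "\<lambda>x y z x' y' z'. \<Sum>j<4. cnj (inv_sqrt2 * node0_kraus (h(0 := j)) x y) * (inv_sqrt2 * node0_kraus (h(0 := j)) x' y')"]) (simp_all add: node0_kraus_gram[simplified] D0_vals)
  finally show ?thesis .
qed

lemma node1_gram:
  assumes "a < D0 1" "b < D0 1"
  shows "node_gram R M L 1 h a b = (if a = b then 1 else 0)"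
proof -
  have "node_gram R M L 1 h a b = (\<Sum>j<8. cnj (inv_sqrt2 * node1_kraus (h(1 := j)) (a mod 2) (a div 2 mod 2) (a div 4 mod 2)) * (inv_sqrt2 * node1_kraus (h(1 := j)) (b mod 2) (b div 2 mod 2) (b div 4 mod 2)))"
    by (simp add: node_gram_def outcomes_def kraus_scale_def node_kraus_def Dout_vals sum_lessThan_1)
  also have "\<dots> = (if a = b then 1 else 0)"
    using assms by (intro delta_of_bits8[where F = "\<lambda>x y z x' y' z'. \<Sum>j<8. cnj (inv_sqrt2 * node1_kraus (h(1 := j)) x y z) * (inv_sqrt2 * node1_kraus (h(1 := j)) x' y' z')"]) (simp_all add: node1_kraus_gram[simplified] D0_vals)
  finally show ?thesis .
qed

lemma node2_gram:
  assumes "\<forall>c<2. unitary2 (R c)" and "a < D0 2" "b < D0 2"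
  shows "node_gram R M L 2 h a b = (if a = b then 1 else 0)"
proof -
  have "node_gram R M L 2 h a b = (\<Sum>j<8. cnj (inv_sqrt2 * inv_sqrt2 * node2_kraus R (h(2 := j)) (a mod 2) (a div 2 mod 2) (a div 4 mod 2)) * (inv_sqrt2 * inv_sqrt2 * node2_kraus R (h(2 := j)) (b mod 2) (b div 2 mod 2) (b div 4 mod 2)))"
    by (simp add: node_gram_def outcomes_def kraus_scale_def node_kraus_def Dout_vals sum_lessThan_1)
  also have "\<dots> = (if a = b then 1 else 0)"
    using assms by (intro delta_of_bits8[where F = "\<lambda>x y z x' y' z'. \<Sum>j<8. cnj (inv_sqrt2 * inv_sqrt2 * node2_kraus R (h(2 := j)) x y z) * (inv_sqrt2 * inv_sqrt2 * node2_kraus R (h(2 := j)) x' y' z')"]) (simp_all add: node2_kraus_gram[OF assms(1), simplified] D0_vals)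
  finally show ?thesis .
qed

lemma node3_gram:
  assumes "a < D0 3" "b < D0 3"
  shows "node_gram R M L 3 h a b = (if a = b then 1 else 0)"
proof -
  have "node_gram R M L 3 h a b = (\<Sum>j<8. cnj (inv_sqrt2 * node3_kraus (h(3 := j)) (a mod 2) (a div 2 mod 2) (a div 4 mod 2)) * (inv_sqrt2 * node3_kraus (h(3 := j)) (b mod 2) (b div 2 mod 2) (b div 4 mod 2)))"
    by (simp add: node_gram_def outcomes_def kraus_scale_def node_kraus_def Dout_vals sum_lessThan_1)
  also have "\<dots> = (if a = b then 1 else 0)"
    using assms by (intro delta_of_bits8[where F = "\<lambda>x y z x' y' z'. \<Sum>j<8. cnj (inv_sqrt2 * node3_kraus (h(3 := j)) x y z) * (inv_sqrt2 * node3_kraus (h(3 := j)) x' y' z')"]) (simp_all add: node3_kraus_gram[simplified] D0_vals)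
  finally show ?thesis .
qed

lemma node4_gram:
  assumes "\<forall>c<2. unitary2 (M c)" and "a < D0 4" "b < D0 4"
  shows "node_gram R M L 4 h a b = (if a = b then 1 else 0)"
proof -
  have "node_gram R M L 4 h a b = (\<Sum>j<8. cnj (inv_sqrt2 * inv_sqrt2 * node4_kraus M (h(4 := j)) (a mod 2) (a div 2 mod 2) (a div 4 mod 2)) * (inv_sqrt2 * inv_sqrt2 * node4_kraus M (h(4 := j)) (b mod 2) (b div 2 mod 2) (b div 4 mod 2)))"
    by (simp add: node_gram_def outcomes_def kraus_scale_def node_kraus_def Dout_vals sum_lessThan_1)
  also have "\<dots> = (if a = b then 1 else 0)"
    using assms by (intro delta_of_bits8[where F = "\<lambda>x y z x' y' z'. \<Sum>j<8. cnj (inv_sqrt2 * inv_sqrt2 * node4_kraus M (h(4 := j)) x y z) * (inv_sqrt2 * inv_sqrt2 * node4_kraus M (h(4 := j)) x' y' z')"]) (simp_all add: node4_kraus_gram[OF assms(1), simplified] D0_vals)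
  finally show ?thesis .
qed

lemma node5_gram:
  assumes "a < D0 5" "b < D0 5"
  shows "node_gram R M L 5 h a b = (if a = b then 1 else 0)"
proof -
  have "node_gram R M L 5 h a b = (\<Sum>j<8. cnj (inv_sqrt2 * node5_kraus (h(5 := j)) (a mod 2) (a div 2 mod 2) (a div 4 mod 2)) * (inv_sqrt2 * node5_kraus (h(5 := j)) (b mod 2) (b div 2 mod 2) (b div 4 mod 2)))"
    by (simp add: node_gram_def outcomes_def kraus_scale_def node_kraus_def Dout_vals sum_lessThan_1)
  also have "\<dots> = (if a = b then 1 else 0)"
    using assms by (intro delta_of_bits8[where F = "\<lambda>x y z x' y' z'. \<Sum>j<8. cnj (inv_sqrt2 * node5_kraus (h(5 := j)) x y z) * (inv_sqrt2 * node5_kraus (h(5 := j)) x' y' z')"]) (simp_all add: node5_kraus_gram[simplified] D0_vals)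
  finally show ?thesis .
qed

lemma node6_gram:
  assumes "\<forall>c<2. unitary2 (L c)" and "a < D0 6" "b < D0 6"
  shows "node_gram R M L 6 h a b = (if a = b then 1 else 0)"
proof -
  have "node_gram R M L 6 h a b = (\<Sum>j<2. \<Sum>i<2. cnj (inv_sqrt2 * node6_kraus L (h(6 := j)) i (a mod 2) (a div 2 mod 2)) * (inv_sqrt2 * node6_kraus L (h(6 := j)) i (b mod 2) (b div 2 mod 2)))"
    by (simp add: node_gram_def outcomes_def kraus_scale_def node_kraus_def Dout_vals sum_lessThan_1)
  also have "\<dots> = (if a = b then 1 else 0)"
    using assms by (intro delta_of_bits4[where F = "\<lambda>x y z x' y' z'. \<Sum>j<2. \<Sum>i<2. cnj (inv_sqrt2 * node6_kraus L (h(6 := j)) i x y) * (inv_sqrt2 * node6_kraus L (h(6 := j)) i x' y')"]) (simp_all add: node6_kraus_gram[OF assms(1), simplified] D0_vals)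
  finally show ?thesis .
qed

lemma node7_gram:
  assumes "a < D0 7" "b < D0 7"
  shows "node_gram R M L 7 h a b = (if a = b then 1 else 0)"
proof -
  have "node_gram R M L 7 h a b = (\<Sum>j<1. \<Sum>i<2. cnj (1 * node7_kraus (h(7 := j)) i (a mod 2)) * (1 * node7_kraus (h(7 := j)) i (b mod 2)))"
    by (simp add: node_gram_def outcomes_def kraus_scale_def node_kraus_def Dout_vals sum_lessThan_1)
  also have "\<dots> = (if a = b then 1 else 0)"
    using assms by (intro delta_of_bits2[where F = "\<lambda>x y z x' y' z'. \<Sum>j<1. \<Sum>i<2. cnj (1 * node7_kraus (h(7 := j)) i x) * (1 * node7_kraus (h(7 := j)) i x')"]) (simp_all add: node7_kraus_gram D0_vals sum_lessThan_1)
  finally show ?thesis .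
qed

lemma grail_kraus_complete:
  assumes "\<forall>c<2. unitary2 (R c)" "\<forall>c<2. unitary2 (M c)" "\<forall>c<2. unitary2 (L c)" and "v < 8"
  shows "kraus_complete (outcomes v) (D0 v) (Dout v) (grail_kraus R M L v h)"
  using less8_cases[OF assms(4)] assms(1-3)
  by (elim disjE) (auto intro!: grail_kraus_completeI node0_gram node1_gram node2_gram node3_gram
      node4_gram node5_gram node6_gram node7_gram)

section \<open>The protocol\<close>

definition input_amp :: "complex vec \<Rightarrow> nat \<Rightarrow> nat \<Rightarrow> complex" where "input_amp \<psi> a b = \<psi> $ (2 * a + b)"

text \<open>The power of inv_sqrt2 collects the normalisations kraus_scale and the EPR amplitudes
  used up by nodes 0, ..., v - 1.\<close>

definition branch_state :: "complex vec \<Rightarrow> ctrl_gate \<Rightarrow> ctrl_gate \<Rightarrow> ctrl_gate \<Rightarrow> nat \<Rightarrow> (nat \<Rightarrow> nat) \<Rightarrow> cfg \<Rightarrow> complex" where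
  "branch_state \<psi> R M L v h = (if v = 0 then stage0 (input_amp \<psi>)
     else if v = 1 then (\<lambda>c. inv_sqrt2 ^ 2 * stage1 (amp1 (input_amp \<psi>) h) c)
     else if v = 2 then (\<lambda>c. inv_sqrt2 ^ 5 * stage2 (amp2 (input_amp \<psi>) h) c)
     else if v = 3 then (\<lambda>c. inv_sqrt2 ^ 8 * stage3 (amp3 R (input_amp \<psi>) h) c)
     else if v = 4 then (\<lambda>c. inv_sqrt2 ^ 11 * stage4 (amp4 R (input_amp \<psi>) h) c)
     else if v = 5 then (\<lambda>c. inv_sqrt2 ^ 14 * stage5 (amp5 R M (input_amp \<psi>) h) c)
     else if v = 6 then (\<lambda>c. inv_sqrt2 ^ 17 * stage6 (amp6 R M (input_amp \<psi>) h) c)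
     else if v = 7 then (\<lambda>c. inv_sqrt2 ^ 18 * stage7 (amp7 R M L (input_amp \<psi>) h) c)
     else (\<lambda>c. inv_sqrt2 ^ 18 * stage8 (amp8 R M L (input_amp \<psi>) h) c))"

lemma local_apply_grail_kraus: "c v < Dout v \<Longrightarrow> local_apply v (grail_kraus R M L v h j) f c
   = (\<Sum>a<D0 v. (kraus_scale v * node_kraus R M L v (h(v := j)) (c v) (a mod 2) (a div 2 mod 2) (a div 4 mod 2)) * f (c(v := a)))"
  unfolding local_apply_def by (intro sum.cong) (simp_all add: grail_kraus_def)

lemma configs_dims_after_less: assumes "c \<in> configs (dims_after (Suc v))" "v < 8" shows "c v < Dout v"
proof -
  have "\<forall>va<8. c va < dims_after (Suc v) va" using assms(1) by (simp add: configs_def num_nodes_def)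
  then have "c v < dims_after (Suc v) v" using assms(2) by blast
  then show ?thesis by (simp add: dims_after_def)
qed

lemma amp1_upd: "amp1 ps (h(1 := j)) = amp1 ps h" by (simp add: fun_eq_iff amp1_def node0_kraus_def)
lemma amp2_upd: "amp2 ps (h(2 := j)) = amp2 ps h" by (simp add: fun_eq_iff amp2_def amp1_def node1_kraus_def node0_kraus_def)
lemma amp3_upd: "amp3 R ps (h(3 := j)) = amp3 R ps h" by (simp add: fun_eq_iff amp3_eq_closed amp3_closed_def)
lemma amp4_upd: "amp4 R ps (h(4 := j)) = amp4 R ps h" by (simp add: fun_eq_iff amp4_eq_closed amp4_closed_def)
lemma amp5_upd: "amp5 R M ps (h(5 := j)) = amp5 R M ps h" by (simp add: fun_eq_iff amp5_eq_closed amp5_closed_def)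
lemma amp6_upd: "amp6 R M ps (h(6 := j)) = amp6 R M ps h" by (simp add: fun_eq_iff amp6_eq_closed amp6_closed_def)
lemma amp7_upd: "amp7 R M L ps (h(7 := j)) = amp7 R M L ps h" by (simp add: fun_eq_iff amp7_eq_closed amp7_closed_def)

lemma branch_state_step0: assumes c: "c \<in> configs (dims_after (Suc 0))"
  shows "local_apply 0 (grail_kraus R M L 0 h j) (branch_state \<psi> R M L 0 h) c = branch_state \<psi> R M L (Suc 0) (h(0 := j)) c"
proof -
  have cv: "c 0 < Dout 0" using configs_dims_after_less[OF c] by simp
  have "local_apply 0 (grail_kraus R M L 0 h j) (branch_state \<psi> R M L 0 h) c = (\<Sum>a<4. (inv_sqrt2 * node0_kraus (h(0 := j)) (a mod 2) (a div 2 mod 2)) * (1 * stage0 (input_amp \<psi>) (c(0 := a))))"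
    by (simp add: local_apply_grail_kraus[where c = c and v = 0, OF cv] D0_vals kraus_scale_def node_kraus_def branch_state_def)
  also have "\<dots> = (inv_sqrt2 * 1) * (\<Sum>a<4. (\<lambda>p0 p1 p2. node0_kraus (h(0 := j)) p0 p1) (a mod 2) (a div 2 mod 2) (a div 4 mod 2) * stage0 (input_amp \<psi>) (c(0 := a)))"
    by (simp add: sum_distrib_left mult_ac)
  also have "\<dots> = (inv_sqrt2 * 1) * (inv_sqrt2 * stage1 (amp1 (input_amp \<psi>) (h(0 := j))) c)"
    by (simp only: stage0_measure[where t = "\<lambda>p0 p1 p2. node0_kraus (h(0 := j)) p0 p1"]) (simp add: amp1_def fun_eq_iff stage1_def)
  also have "\<dots> = branch_state \<psi> R M L (Suc 0) (h(0 := j)) c"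
    by (simp add: branch_state_def; simp add: numeral_eq_Suc power_Suc mult_ac)
  finally show ?thesis .
qed

lemma branch_state_step1: assumes c: "c \<in> configs (dims_after (Suc 1))"
  shows "local_apply 1 (grail_kraus R M L 1 h j) (branch_state \<psi> R M L 1 h) c = branch_state \<psi> R M L (Suc 1) (h(1 := j)) c"
proof -
  have cv: "c 1 < Dout 1" using configs_dims_after_less[OF c] by simp
  have "local_apply 1 (grail_kraus R M L 1 h j) (branch_state \<psi> R M L 1 h) c = (\<Sum>a<8. (inv_sqrt2 * node1_kraus (h(1 := j)) (a mod 2) (a div 2 mod 2) (a div 4 mod 2)) * (inv_sqrt2 ^ 2 * stage1 (amp1 (input_amp \<psi>) h) (c(1 := a))))"
    by (simp add: local_apply_grail_kraus[where c = c and v = 1, OF cv] D0_vals kraus_scale_def node_kraus_def branch_state_def)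
  also have "\<dots> = (inv_sqrt2 * inv_sqrt2 ^ 2) * (\<Sum>a<8. (\<lambda>p0 p1 p2. node1_kraus (h(1 := j)) p0 p1 p2) (a mod 2) (a div 2 mod 2) (a div 4 mod 2) * stage1 (amp1 (input_amp \<psi>) h) (c(1 := a)))"
    by (simp add: sum_distrib_left mult_ac)
  also have "\<dots> = (inv_sqrt2 * inv_sqrt2 ^ 2) * ((inv_sqrt2 * inv_sqrt2) * stage2 (amp2 (input_amp \<psi>) (h(1 := j))) c)"
    by (simp only: stage1_measure[where t = "\<lambda>p0 p1 p2. node1_kraus (h(1 := j)) p0 p1 p2"]) (simp add: amp2_def amp1_upd fun_eq_iff stage2_def)
  also have "\<dots> = branch_state \<psi> R M L (Suc 1) (h(1 := j)) c"
    by (simp add: branch_state_def; simp add: numeral_eq_Suc power_Suc mult_ac)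
  finally show ?thesis .
qed

lemma branch_state_step2: assumes c: "c \<in> configs (dims_after (Suc 2))"
  shows "local_apply 2 (grail_kraus R M L 2 h j) (branch_state \<psi> R M L 2 h) c = branch_state \<psi> R M L (Suc 2) (h(2 := j)) c"
proof -
  have cv: "c 2 < Dout 2" using configs_dims_after_less[OF c] by simp
  have "local_apply 2 (grail_kraus R M L 2 h j) (branch_state \<psi> R M L 2 h) c = (\<Sum>a<8. (inv_sqrt2 * inv_sqrt2 * node2_kraus R (h(2 := j)) (a mod 2) (a div 2 mod 2) (a div 4 mod 2)) * (inv_sqrt2 ^ 5 * stage2 (amp2 (input_amp \<psi>) h) (c(2 := a))))"
    by (simp add: local_apply_grail_kraus[where c = c and v = 2, OF cv] D0_vals kraus_scale_def node_kraus_def branch_state_def)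
  also have "\<dots> = (inv_sqrt2 * inv_sqrt2 * inv_sqrt2 ^ 5) * (\<Sum>a<8. (\<lambda>p0 p1 p2. node2_kraus R (h(2 := j)) p0 p1 p2) (a mod 2) (a div 2 mod 2) (a div 4 mod 2) * stage2 (amp2 (input_amp \<psi>) h) (c(2 := a)))"
    by (simp add: sum_distrib_left mult_ac)
  also have "\<dots> = (inv_sqrt2 * inv_sqrt2 * inv_sqrt2 ^ 5) * (inv_sqrt2 * stage3 (amp3 R (input_amp \<psi>) (h(2 := j))) c)"
    by (simp only: stage2_measure[where t = "\<lambda>p0 p1 p2. node2_kraus R (h(2 := j)) p0 p1 p2"]) (simp add: amp3_def amp2_upd fun_eq_iff stage3_def)
  also have "\<dots> = branch_state \<psi> R M L (Suc 2) (h(2 := j)) c"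
    by (simp add: branch_state_def; simp add: numeral_eq_Suc power_Suc mult_ac)
  finally show ?thesis .
qed

lemma branch_state_step3: assumes c: "c \<in> configs (dims_after (Suc 3))"
  shows "local_apply 3 (grail_kraus R M L 3 h j) (branch_state \<psi> R M L 3 h) c = branch_state \<psi> R M L (Suc 3) (h(3 := j)) c"
proof -
  have cv: "c 3 < Dout 3" using configs_dims_after_less[OF c] by simp
  have "local_apply 3 (grail_kraus R M L 3 h j) (branch_state \<psi> R M L 3 h) c = (\<Sum>a<8. (inv_sqrt2 * node3_kraus (h(3 := j)) (a mod 2) (a div 2 mod 2) (a div 4 mod 2)) * (inv_sqrt2 ^ 8 * stage3 (amp3 R (input_amp \<psi>) h) (c(3 := a))))"
    by (simp add: local_apply_grail_kraus[where c = c and v = 3, OF cv] D0_vals kraus_scale_def node_kraus_def branch_state_def)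
  also have "\<dots> = (inv_sqrt2 * inv_sqrt2 ^ 8) * (\<Sum>a<8. (\<lambda>p0 p1 p2. node3_kraus (h(3 := j)) p0 p1 p2) (a mod 2) (a div 2 mod 2) (a div 4 mod 2) * stage3 (amp3 R (input_amp \<psi>) h) (c(3 := a)))"
    by (simp add: sum_distrib_left mult_ac)
  also have "\<dots> = (inv_sqrt2 * inv_sqrt2 ^ 8) * ((inv_sqrt2 * inv_sqrt2) * stage4 (amp4 R (input_amp \<psi>) (h(3 := j))) c)"
    by (simp only: stage3_measure[where t = "\<lambda>p0 p1 p2. node3_kraus (h(3 := j)) p0 p1 p2"]) (simp add: amp4_def amp3_upd fun_eq_iff stage4_def)
  also have "\<dots> = branch_state \<psi> R M L (Suc 3) (h(3 := j)) c"
    by (simp add: branch_state_def; simp add: numeral_eq_Suc power_Suc mult_ac)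
  finally show ?thesis .
qed

lemma branch_state_step4: assumes c: "c \<in> configs (dims_after (Suc 4))"
  shows "local_apply 4 (grail_kraus R M L 4 h j) (branch_state \<psi> R M L 4 h) c = branch_state \<psi> R M L (Suc 4) (h(4 := j)) c"
proof -
  have cv: "c 4 < Dout 4" using configs_dims_after_less[OF c] by simp
  have "local_apply 4 (grail_kraus R M L 4 h j) (branch_state \<psi> R M L 4 h) c = (\<Sum>a<8. (inv_sqrt2 * inv_sqrt2 * node4_kraus M (h(4 := j)) (a mod 2) (a div 2 mod 2) (a div 4 mod 2)) * (inv_sqrt2 ^ 11 * stage4 (amp4 R (input_amp \<psi>) h) (c(4 := a))))"
    by (simp add: local_apply_grail_kraus[where c = c and v = 4, OF cv] D0_vals kraus_scale_def node_kraus_def branch_state_def)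
  also have "\<dots> = (inv_sqrt2 * inv_sqrt2 * inv_sqrt2 ^ 11) * (\<Sum>a<8. (\<lambda>p0 p1 p2. node4_kraus M (h(4 := j)) p0 p1 p2) (a mod 2) (a div 2 mod 2) (a div 4 mod 2) * stage4 (amp4 R (input_amp \<psi>) h) (c(4 := a)))"
    by (simp add: sum_distrib_left mult_ac)
  also have "\<dots> = (inv_sqrt2 * inv_sqrt2 * inv_sqrt2 ^ 11) * (inv_sqrt2 * stage5 (amp5 R M (input_amp \<psi>) (h(4 := j))) c)"
    by (simp only: stage4_measure[where t = "\<lambda>p0 p1 p2. node4_kraus M (h(4 := j)) p0 p1 p2"]) (simp add: amp5_def amp4_upd fun_eq_iff stage5_def)
  also have "\<dots> = branch_state \<psi> R M L (Suc 4) (h(4 := j)) c"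
    by (simp add: branch_state_def; simp add: numeral_eq_Suc power_Suc mult_ac)
  finally show ?thesis .
qed

lemma branch_state_step5: assumes c: "c \<in> configs (dims_after (Suc 5))"
  shows "local_apply 5 (grail_kraus R M L 5 h j) (branch_state \<psi> R M L 5 h) c = branch_state \<psi> R M L (Suc 5) (h(5 := j)) c"
proof -
  have cv: "c 5 < Dout 5" using configs_dims_after_less[OF c] by simp
  have "local_apply 5 (grail_kraus R M L 5 h j) (branch_state \<psi> R M L 5 h) c = (\<Sum>a<8. (inv_sqrt2 * node5_kraus (h(5 := j)) (a mod 2) (a div 2 mod 2) (a div 4 mod 2)) * (inv_sqrt2 ^ 14 * stage5 (amp5 R M (input_amp \<psi>) h) (c(5 := a))))"
    by (simp add: local_apply_grail_kraus[where c = c and v = 5, OF cv] D0_vals kraus_scale_def node_kraus_def branch_state_def)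
  also have "\<dots> = (inv_sqrt2 * inv_sqrt2 ^ 14) * (\<Sum>a<8. (\<lambda>p0 p1 p2. node5_kraus (h(5 := j)) p0 p1 p2) (a mod 2) (a div 2 mod 2) (a div 4 mod 2) * stage5 (amp5 R M (input_amp \<psi>) h) (c(5 := a)))"
    by (simp add: sum_distrib_left mult_ac)
  also have "\<dots> = (inv_sqrt2 * inv_sqrt2 ^ 14) * ((inv_sqrt2 * inv_sqrt2) * stage6 (amp6 R M (input_amp \<psi>) (h(5 := j))) c)"
    by (simp only: stage5_measure[where t = "\<lambda>p0 p1 p2. node5_kraus (h(5 := j)) p0 p1 p2"]) (simp add: amp6_def amp5_upd fun_eq_iff stage6_def)
  also have "\<dots> = branch_state \<psi> R M L (Suc 5) (h(5 := j)) c"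
    by (simp add: branch_state_def; simp add: numeral_eq_Suc power_Suc mult_ac)
  finally show ?thesis .
qed

lemma branch_state_step6: assumes c: "c \<in> configs (dims_after (Suc 6))"
  shows "local_apply 6 (grail_kraus R M L 6 h j) (branch_state \<psi> R M L 6 h) c = branch_state \<psi> R M L (Suc 6) (h(6 := j)) c"
proof -
  have cv: "c 6 < Dout 6" using configs_dims_after_less[OF c] by simp
  have "local_apply 6 (grail_kraus R M L 6 h j) (branch_state \<psi> R M L 6 h) c = (\<Sum>a<4. (inv_sqrt2 * node6_kraus L (h(6 := j)) (c 6) (a mod 2) (a div 2 mod 2)) * (inv_sqrt2 ^ 17 * stage6 (amp6 R M (input_amp \<psi>) h) (c(6 := a))))"
    by (simp add: local_apply_grail_kraus[where c = c and v = 6, OF cv] D0_vals kraus_scale_def node_kraus_def branch_state_def)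
  also have "\<dots> = (inv_sqrt2 * inv_sqrt2 ^ 17) * (\<Sum>a<4. (\<lambda>p0 p1 p2. node6_kraus L (h(6 := j)) (c 6) p0 p1) (a mod 2) (a div 2 mod 2) (a div 4 mod 2) * stage6 (amp6 R M (input_amp \<psi>) h) (c(6 := a)))"
    by (simp add: sum_distrib_left mult_ac)
  also have "\<dots> = (inv_sqrt2 * inv_sqrt2 ^ 17) * (1 * stage7 (amp7 R M L (input_amp \<psi>) (h(6 := j))) c)"
    by (simp only: stage6_measure[where t = "\<lambda>p0 p1 p2. node6_kraus L (h(6 := j)) (c 6) p0 p1"]) (simp add: amp7_def amp6_upd fun_eq_iff stage7_def)
  also have "\<dots> = branch_state \<psi> R M L (Suc 6) (h(6 := j)) c"
    by (simp add: branch_state_def; simp add: numeral_eq_Suc power_Suc mult_ac)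
  finally show ?thesis .
qed

lemma branch_state_step7: assumes c: "c \<in> configs (dims_after (Suc 7))"
  shows "local_apply 7 (grail_kraus R M L 7 h j) (branch_state \<psi> R M L 7 h) c = branch_state \<psi> R M L (Suc 7) (h(7 := j)) c"
proof -
  have cv: "c 7 < Dout 7" using configs_dims_after_less[OF c] by simp
  have "local_apply 7 (grail_kraus R M L 7 h j) (branch_state \<psi> R M L 7 h) c = (\<Sum>a<2. (1 * node7_kraus (h(7 := j)) (c 7) (a mod 2)) * (inv_sqrt2 ^ 18 * stage7 (amp7 R M L (input_amp \<psi>) h) (c(7 := a))))"
    by (simp add: local_apply_grail_kraus[where c = c and v = 7, OF cv] D0_vals kraus_scale_def node_kraus_def branch_state_def)
  also have "\<dots> = (1 * inv_sqrt2 ^ 18) * (\<Sum>a<2. (\<lambda>p0 p1 p2. node7_kraus (h(7 := j)) (c 7) p0) (a mod 2) (a div 2 mod 2) (a div 4 mod 2) * stage7 (amp7 R M L (input_amp \<psi>) h) (c(7 := a)))"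
    by (simp add: sum_distrib_left mult_ac)
  also have "\<dots> = (1 * inv_sqrt2 ^ 18) * (1 * stage8 (amp8 R M L (input_amp \<psi>) (h(7 := j))) c)"
    by (simp only: stage7_measure[where t = "\<lambda>p0 p1 p2. node7_kraus (h(7 := j)) (c 7) p0"]) (simp add: amp8_def amp7_upd fun_eq_iff stage8_def)
  also have "\<dots> = branch_state \<psi> R M L (Suc 7) (h(7 := j)) c"
    by (simp add: branch_state_def; simp add: numeral_eq_Suc power_Suc mult_ac)
  finally show ?thesis .
qed

lemma amp8_closed_output: fixes L M R :: ctrl_gate
  assumes y: "y1 < 2" "y2 < 2" and d: "dim_vec \<psi> = 4" and U4: "U \<in> carrier_mat 4 4"
  and dec: "\<And>a b. a < 2 \<Longrightarrow> b < 2 \<Longrightarrow> U $$ (2*y1+y2, 2*a+b) = (\<Sum>q<2. L y2 y1 q * M q y2 b * R b q a)"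
  shows "amp8_closed R M L (input_amp \<psi>) y1 y2 = (U *\<^sub>v \<psi>) $ (2 * y1 + y2)"
proof -
  have i: "2 * y1 + y2 < dim_row U" using y U4 by simp
  have "(U *\<^sub>v \<psi>) $ (2 * y1 + y2) = (\<Sum>k\<in>{0..<4}. U $$ (2 * y1 + y2, k) * \<psi> $ k)"
    using i U4 d by (simp add: scalar_prod_def)
  also have "\<dots> = U $$ (2 * y1 + y2, 2*0+0) * \<psi> $ 0 + U $$ (2 * y1 + y2, 2*0+1) * \<psi> $ 1
      + U $$ (2 * y1 + y2, 2*1+0) * \<psi> $ 2 + U $$ (2 * y1 + y2, 2*1+1) * \<psi> $ 3"
    by (simp add: atLeast0LessThan sum_lessThan_4)
  also have "\<dots> = amp8_closed R M L (input_amp \<psi>) y1 y2"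
  proof -
    show ?thesis using dec[of 0 0] dec[of 0 1] dec[of 1 0] dec[of 1 1]
      by (simp add: amp8_closed_def input_amp_def sum_lessThan_2 algebra_simps numeral_eq_Suc One_nat_def)
  qed
  finally show ?thesis by simp
qed

lemma prod_outcomes: "(\<Prod>w\<in>{0..<8}. complex_of_nat (outcomes w)) = 262144"
proof -
  have "{0..<8::nat} = {0,1,2,3,4,5,6,7}" by auto
  then show ?thesis by (simp add: outcomes_def)
qed

lemma outcomes_normalization: "262144 * inv_sqrt2 ^ 36 = 1"
proof -
  have "inv_sqrt2 ^ 36 = (inv_sqrt2 * inv_sqrt2) ^ 18" by (simp add: power_mult_distrib flip: power_add)
  then show ?thesis by (simp add: inv_sqrt2_sq power_divide) (simp add: mult.commute)
qed

lemma det_implementable_of_ctrl_decomposition: fixes L M R :: ctrl_gate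
  assumes UR: "\<forall>c<2. unitary2 (R c)" and UM: "\<forall>c<2. unitary2 (M c)" and UL: "\<forall>c<2. unitary2 (L c)"
    and dec: "\<And>y1 y2 a b. y1 < 2 \<Longrightarrow> y2 < 2 \<Longrightarrow> a < 2 \<Longrightarrow> b < 2 \<Longrightarrow>
       U $$ (2*y1+y2, 2*a+b) = (\<Sum>q<2. L y2 y1 q * M q y2 b * R b q a)"
    and U4: "U \<in> carrier_mat 4 4"
  shows "det_implementable U"
proof -
  have C: "\<forall>v<8. \<forall>h. kraus_complete (outcomes v) (D0 v) (Dout v) (grail_kraus R M L v h)"
    using grail_kraus_complete[OF UR UM UL] by blast
  define \<Lambda> where "\<Lambda> = seq_protocol outcomes (grail_kraus R M L) 8 0 (\<lambda>_. 0)"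
  have L: "locc D0 Dout \<Lambda>" unfolding \<Lambda>_def using seq_protocol_locc[OF C, of 8 0] by (simp add: dims_after_0)
  have V: "\<Lambda> (rho0 \<psi>) c c' = (U *\<^sub>v \<psi>) $ out_idx c * cnj ((U *\<^sub>v \<psi>) $ out_idx c')"
    if d: "dim_vec \<psi> = 4" and c: "c \<in> configs Dout" and c': "c' \<in> configs Dout" for \<psi> c c'
  proof -
    have r0: "rho0 \<psi> = pure_op (branch_state \<psi> R M L 0 (\<lambda>_. 0))"
      by (simp add: rho0_def pure_op_def branch_state_def init_amp_stage0 input_amp_def[abs_def])
    have S: "local_apply v (grail_kraus R M L v h j) (branch_state \<psi> R M L v h) c = branch_state \<psi> R M L (Suc v) (h(v := j)) c"
      if "v < 8" "j < outcomes v" "c \<in> configs (dims_after (Suc v))" for v h j c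
      using less8_cases[OF that(1)] that(3)
      by (elim disjE) (simp_all add: branch_state_step0 branch_state_step1 branch_state_step2 branch_state_step3 branch_state_step4 branch_state_step5 branch_state_step6 branch_state_step7)
    have F: "branch_state \<psi> R M L 8 h c = inv_sqrt2 ^ 18 * (U *\<^sub>v \<psi>) $ out_idx c" if "c \<in> configs Dout" for h c
    proof -
      have "c 6 < Dout 6" "c 7 < Dout 7" using that by (auto simp: configs_def num_nodes_def)
      then have y: "c 6 < 2" "c 7 < 2" by (simp_all add: Dout_def)
      show ?thesis using amp8_closed_output[where L = L and M = M and R = R, OF y d U4 dec[OF y]] amp8_eq_closed[OF y(2)]
        by (simp add: branch_state_def stage8_def out_idx_def)
    qed
    have "\<Lambda> (rho0 \<psi>) c c' = (\<Prod>w\<in>{0..<8}. complex_of_nat (outcomes w)) * (inv_sqrt2 ^ 18 * cnj (inv_sqrt2 ^ 18))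
        * ((U *\<^sub>v \<psi>) $ out_idx c * cnj ((U *\<^sub>v \<psi>) $ out_idx c'))"
      unfolding \<Lambda>_def r0
      by (rule seq_protocol_pure_op[OF C, where \<Psi> = "branch_state \<psi> R M L" and g = "inv_sqrt2 ^ 18" and T = "\<lambda>c. (U *\<^sub>v \<psi>) $ out_idx c"])
        (use S F c c' in auto)
    then show ?thesis by (simp add: prod_outcomes outcomes_normalization)
  qed
  show ?thesis unfolding det_implementable_def using L V by blast
qed

theorem mainTheorem5:
  fixes U :: "complex mat"
  assumes "unitary_mat U 4"
  shows "det_implementable U"
proof (rule ctrl_decomposition[OF assms])
  fix L M R :: ctrl_gate
  assume "\<forall>c<2. unitary2 (R c)" "\<forall>c<2. unitary2 (M c)" "\<forall>c<2. unitary2 (L c)"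
    and "\<And>y1 y2 a b. y1 < 2 \<Longrightarrow> y2 < 2 \<Longrightarrow> a < 2 \<Longrightarrow> b < 2 \<Longrightarrow>
       U $$ (2*y1+y2, 2*a+b) = (\<Sum>q<2. L y2 y1 q * M q y2 b * R b q a)"
  moreover have "U \<in> carrier_mat 4 4" using assms by (simp add: unitary_mat_def)
  ultimately show ?thesis by (rule det_implementable_of_ctrl_decomposition)
qed

end
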